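(* Let $\mathcal{C}$ be a Fraïssé class with Fraïssé limit $\mathbf{U}$. Then $\mathcal{C}$ has the HAP and the amalgamated extension property if and only if every retract of $\mathbf{U}$ is induced by a universal homogeneous retraction, i.e. for every retract $\mathbf{B}$ of $\mathbf{U}$ there exists a universal homogeneous retraction $r:\mathbf{U}\twoheadrightarrow\mathbf{B}$.
   Context: An embedding is an injective homomorphism reflecting all relations. An age is a class of finitely generated structures of one signature with countably many isomorphism types, closed under finitely generated substructures (up to isomorphism) and with the joint embedding property; $\overline{\mathcal{C}}$ is the class of countable structures all of whose finitely generated substructures are isomorphic to members of $\mathcal{C}$; a Fraïssé class is an age with the amalgamation property and its Fraïssé limit is the unique countable homogeneous structure with that age. A substructure $\mathbf{B}\le\mathbf{U}$ is a retract if there is an idempotent endomorphism of $\mathbf{U}$ with image $B$; a homomorphism $r:\mathbf{U}\to\mathbf{B}$ is a retraction if some homomorphism $\iota:\mathbf{B}\to\mathbf{U}$ satisfies $r\circ\iota=1_{\mathbf{B}}$. A universal homogeneous retraction $r:\mathbf{U}\twoheadrightarrow\mathbf{B}$ is a retraction such that for every $\mathbf{A}\in\overline{\mathcal{C}}$ and homomorphism $h:\mathbf{A}\to\mathbf{B}$ there is an embedding $\iota:\mathbf{A}\hookrightarrow\mathbf{U}$ with $h=r\circ\iota$, and for every finitely generated $\mathbf{A}\le\mathbf{U}$ and embedding $\iota:\mathbf{A}\hookrightarrow\mathbf{U}$ with $r\circ\iota=r\restriction_A$ there is an automorphism $\alpha$ of $\mathbf{U}$ with $r\circ\alpha=r$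 and $\alpha\restriction_A=\iota$. Amalgamated extension property of $\mathcal{C}$: for all $\mathbf{A},\mathbf{B}_1,\mathbf{B}_2,\mathbf{T}\in\mathcal{C}$, embeddings $f_i:\mathbf{A}\hookrightarrow\mathbf{B}_i$, homomorphisms $h_i:\mathbf{B}_i\to\mathbf{T}$ with $h_1f_1=h_2f_2$, there exist $\mathbf{C},\mathbf{T}'\in\mathcal{C}$, embeddings $g_i:\mathbf{B}_i\hookrightarrow\mathbf{C}$ with $g_1f_1=g_2f_2$, an embedding $k:\mathbf{T}\hookrightarrow\mathbf{T}'$ and a homomorphism $h:\mathbf{C}\to\mathbf{T}'$ with $hg_i=kh_i$. HAP: for all $\mathbf{A},\mathbf{B}_1,\mathbf{B}_2\in\mathcal{C}$, embedding $f_1:\mathbf{A}\hookrightarrow\mathbf{B}_1$ and homomorphism $f_2:\mathbf{A}\to\mathbf{B}_2$, there exist $\mathbf{C}\in\mathcal{C}$, an embedding $g_2:\mathbf{B}_2\hookrightarrow\mathbf{C}$ and a homomorphism $g_1:\mathbf{B}_1\to\mathbf{C}$ with $g_1f_1=g_2f_2$. *)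

theory Defs
  imports Main "HOL-Library.Countable_Set"
begin

text \<open>A structure has a carrier,
an interpretation of each function symbol (only meaningful on argument lists
of the right length with entries in the carrier) and of each relation symbol.\<close>

record ('a, 'f, 'r) struc =
  s_carrier :: "'a set"
  s_fun :: "'f \<Rightarrow> 'a list \<Rightarrow> 'a"
  s_rel :: "'r \<Rightarrow> 'a list set"

definition args :: "nat \<Rightarrow> 'a set \<Rightarrow> 'a list set" where
  "args n S = {xs. length xs = n \<and> set xs \<subseteq> S}"

definition is_struc :: "('f \<Rightarrow> nat) \<Rightarrow> ('r \<Rightarrow> nat) \<Rightarrow> ('a, 'f, 'r) struc \<Rightarrow> bool" where
  "is_struc fa ra A \<longleftrightarrow>
     (\<forall>f. \<forall>xs\<in>args (fa f) (s_carrier A). s_fun A f xs \<in> s_carrier A) \<and>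
     (\<forall>r. s_rel A r \<subseteq> args (ra r) (s_carrier A))"

definition hom :: "('f \<Rightarrow> nat) \<Rightarrow> ('r \<Rightarrow> nat) \<Rightarrow> ('a, 'f, 'r) struc \<Rightarrow> ('b, 'f, 'r) struc
    \<Rightarrow> ('a \<Rightarrow> 'b) \<Rightarrow> bool" where
  "hom fa ra A B h \<longleftrightarrow>
     (\<forall>x\<in>s_carrier A. h x \<in> s_carrier B) \<and>
     (\<forall>f. \<forall>xs\<in>args (fa f) (s_carrier A). h (s_fun A f xs) = s_fun B f (map h xs)) \<and>
     (\<forall>r. \<forall>xs\<in>s_rel A r. map h xs \<in> s_rel B r)"

definition emb :: "('f \<Rightarrow> nat) \<Rightarrow> ('r \<Rightarrow> nat) \<Rightarrow> ('a, 'f, 'r) struc \<Rightarrow> ('b, 'f, 'r) struc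
    \<Rightarrow> ('a \<Rightarrow> 'b) \<Rightarrow> bool" where
  "emb fa ra A B h \<longleftrightarrow>
     hom fa ra A B h \<and> inj_on h (s_carrier A) \<and>
     (\<forall>r. \<forall>xs\<in>args (ra r) (s_carrier A). map h xs \<in> s_rel B r \<longrightarrow> xs \<in> s_rel A r)"

definition iso :: "('f \<Rightarrow> nat) \<Rightarrow> ('r \<Rightarrow> nat) \<Rightarrow> ('a, 'f, 'r) struc \<Rightarrow> ('b, 'f, 'r) struc
    \<Rightarrow> ('a \<Rightarrow> 'b) \<Rightarrow> bool" where
  "iso fa ra A B h \<longleftrightarrow> emb fa ra A B h \<and> h ` s_carrier A = s_carrier B"

definition isomorphic :: "('f \<Rightarrow> nat) \<Rightarrow> ('r \<Rightarrow> nat) \<Rightarrow> ('a, 'f, 'r) struc \<Rightarrow> ('b, 'f, 'r) struc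
    \<Rightarrow> bool" where
  "isomorphic fa ra A B \<longleftrightarrow> (\<exists>h. iso fa ra A B h)"

definition automorphism :: "('f \<Rightarrow> nat) \<Rightarrow> ('r \<Rightarrow> nat) \<Rightarrow> ('a, 'f, 'r) struc \<Rightarrow> ('a \<Rightarrow> 'a) \<Rightarrow> bool" where
  "automorphism fa ra U \<alpha> \<longleftrightarrow> iso fa ra U U \<alpha>"

definition substruc :: "('f \<Rightarrow> nat) \<Rightarrow> ('r \<Rightarrow> nat) \<Rightarrow> ('a, 'f, 'r) struc \<Rightarrow> ('a, 'f, 'r) struc
    \<Rightarrow> bool" where
  "substruc fa ra A B \<longleftrightarrow>
     is_struc fa ra A \<and> s_carrier A \<subseteq> s_carrier B \<and> emb fa ra A B id"

definition fin_gen :: "('f \<Rightarrow> nat) \<Rightarrow> ('r \<Rightarrow> nat) \<Rightarrow> ('a, 'f, 'r) struc \<Rightarrow> bool" where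
  "fin_gen fa ra A \<longleftrightarrow>
     (\<exists>S. finite S \<and> S \<subseteq> s_carrier A \<and>
        (\<forall>B. substruc fa ra B A \<and> S \<subseteq> s_carrier B \<longrightarrow> s_carrier B = s_carrier A))"

text \<open>All structures considered are countable; they are represented on subsets of nat.
A class is a set of such structures, understood up to isomorphism.\<close>

type_synonym ('f, 'r) cstruc = "(nat, 'f, 'r) struc"

definition is_age :: "('f \<Rightarrow> nat) \<Rightarrow> ('r \<Rightarrow> nat) \<Rightarrow> ('f, 'r) cstruc set \<Rightarrow> bool" where
  "is_age fa ra \<C> \<longleftrightarrow>
     (\<forall>A\<in>\<C>. is_struc fa ra A \<and> fin_gen fa ra A) \<and>
     (\<exists>S\<subseteq>\<C>. countable S \<and> (\<forall>A\<in>\<C>. \<exists>B\<in>S. isomorphic fa ra A B)) \<and>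
     (\<forall>A\<in>\<C>. \<forall>B. substruc fa ra B A \<and> fin_gen fa ra B \<longrightarrow> (\<exists>B'\<in>\<C>. isomorphic fa ra B B')) \<and>
     (\<forall>A\<in>\<C>. \<forall>B\<in>\<C>. \<exists>D\<in>\<C>. (\<exists>f. emb fa ra A D f) \<and> (\<exists>g. emb fa ra B D g))"

definition amalgamation :: "('f \<Rightarrow> nat) \<Rightarrow> ('r \<Rightarrow> nat) \<Rightarrow> ('f, 'r) cstruc set \<Rightarrow> bool" where
  "amalgamation fa ra \<C> \<longleftrightarrow>
     (\<forall>A\<in>\<C>. \<forall>B1\<in>\<C>. \<forall>B2\<in>\<C>. \<forall>f1 f2.
        emb fa ra A B1 f1 \<and> emb fa ra A B2 f2 \<longrightarrow>
        (\<exists>D\<in>\<C>. \<exists>g1 g2. emb fa ra B1 D g1 \<and> emb fa ra B2 D g2 \<and>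
            (\<forall>x\<in>s_carrier A. g1 (f1 x) = g2 (f2 x))))"

definition fraisse_class :: "('f \<Rightarrow> nat) \<Rightarrow> ('r \<Rightarrow> nat) \<Rightarrow> ('f, 'r) cstruc set \<Rightarrow> bool" where
  "fraisse_class fa ra \<C> \<longleftrightarrow> is_age fa ra \<C> \<and> amalgamation fa ra \<C>"

definition closure_class :: "('f \<Rightarrow> nat) \<Rightarrow> ('r \<Rightarrow> nat) \<Rightarrow> ('f, 'r) cstruc set \<Rightarrow> ('f, 'r) cstruc set" where
  "closure_class fa ra \<C> =
     {A. is_struc fa ra A \<and>
         (\<forall>B. substruc fa ra B A \<and> fin_gen fa ra B \<longrightarrow> (\<exists>C\<in>\<C>. isomorphic fa ra B C))}"

definition homogeneous :: "('f \<Rightarrow> nat) \<Rightarrow> ('r \<Rightarrow> nat) \<Rightarrow> ('a, 'f, 'r) struc \<Rightarrow> bool" where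
  "homogeneous fa ra U \<longleftrightarrow>
     (\<forall>A1 A2 h. substruc fa ra A1 U \<and> fin_gen fa ra A1 \<and> substruc fa ra A2 U \<and>
        iso fa ra A1 A2 h \<longrightarrow>
        (\<exists>\<alpha>. automorphism fa ra U \<alpha> \<and> (\<forall>x\<in>s_carrier A1. \<alpha> x = h x)))"

definition fraisse_limit :: "('f \<Rightarrow> nat) \<Rightarrow> ('r \<Rightarrow> nat) \<Rightarrow> ('f, 'r) cstruc set \<Rightarrow> ('f, 'r) cstruc \<Rightarrow> bool" where
  "fraisse_limit fa ra \<C> U \<longleftrightarrow>
     is_struc fa ra U \<and> homogeneous fa ra U \<and>
     (\<forall>A. substruc fa ra A U \<and> fin_gen fa ra A \<longrightarrow> (\<exists>B\<in>\<C>. isomorphic fa ra A B)) \<and>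
     (\<forall>B\<in>\<C>. \<exists>A. substruc fa ra A U \<and> isomorphic fa ra B A)"

definition HAP :: "('f \<Rightarrow> nat) \<Rightarrow> ('r \<Rightarrow> nat) \<Rightarrow> ('f, 'r) cstruc set \<Rightarrow> bool" where
  "HAP fa ra \<C> \<longleftrightarrow>
     (\<forall>A\<in>\<C>. \<forall>B1\<in>\<C>. \<forall>B2\<in>\<C>. \<forall>f1 f2.
        emb fa ra A B1 f1 \<and> hom fa ra A B2 f2 \<longrightarrow>
        (\<exists>C\<in>\<C>. \<exists>g1 g2. emb fa ra B2 C g2 \<and> hom fa ra B1 C g1 \<and>
            (\<forall>x\<in>s_carrier A. g1 (f1 x) = g2 (f2 x))))"

definition amalgamated_extension :: "('f \<Rightarrow> nat) \<Rightarrow> ('r \<Rightarrow> nat) \<Rightarrow> ('f, 'r) cstruc set \<Rightarrow> bool" where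
  "amalgamated_extension fa ra \<C> \<longleftrightarrow>
     (\<forall>A\<in>\<C>. \<forall>B1\<in>\<C>. \<forall>B2\<in>\<C>. \<forall>T\<in>\<C>. \<forall>f1 f2 h1 h2.
        emb fa ra A B1 f1 \<and> emb fa ra A B2 f2 \<and> hom fa ra B1 T h1 \<and> hom fa ra B2 T h2 \<and>
        (\<forall>x\<in>s_carrier A. h1 (f1 x) = h2 (f2 x)) \<longrightarrow>
        (\<exists>C\<in>\<C>. \<exists>T'\<in>\<C>. \<exists>g1 g2 k h.
            emb fa ra B1 C g1 \<and> emb fa ra B2 C g2 \<and>
            (\<forall>x\<in>s_carrier A. g1 (f1 x) = g2 (f2 x)) \<and>
            emb fa ra T T' k \<and> hom fa ra C T' h \<and>
            (\<forall>x\<in>s_carrier B1. h (g1 x) = k (h1 x)) \<and>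
            (\<forall>x\<in>s_carrier B2. h (g2 x) = k (h2 x))))"

definition retract :: "('f \<Rightarrow> nat) \<Rightarrow> ('r \<Rightarrow> nat) \<Rightarrow> ('a, 'f, 'r) struc \<Rightarrow> ('a, 'f, 'r) struc \<Rightarrow> bool" where
  "retract fa ra U B \<longleftrightarrow>
     substruc fa ra B U \<and>
     (\<exists>e. hom fa ra U U e \<and> (\<forall>x\<in>s_carrier U. e (e x) = e x) \<and> e ` s_carrier U = s_carrier B)"

definition retraction :: "('f \<Rightarrow> nat) \<Rightarrow> ('r \<Rightarrow> nat) \<Rightarrow> ('a, 'f, 'r) struc \<Rightarrow> ('b, 'f, 'r) struc
    \<Rightarrow> ('a \<Rightarrow> 'b) \<Rightarrow> bool" where
  "retraction fa ra U B r \<longleftrightarrow>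
     hom fa ra U B r \<and> (\<exists>\<iota>. hom fa ra B U \<iota> \<and> (\<forall>x\<in>s_carrier B. r (\<iota> x) = x))"

definition uh_retraction :: "('f \<Rightarrow> nat) \<Rightarrow> ('r \<Rightarrow> nat) \<Rightarrow> ('f, 'r) cstruc set
    \<Rightarrow> ('f, 'r) cstruc \<Rightarrow> ('f, 'r) cstruc \<Rightarrow> (nat \<Rightarrow> nat) \<Rightarrow> bool" where
  "uh_retraction fa ra \<C> U B r \<longleftrightarrow>
     retraction fa ra U B r \<and>
     (\<forall>A\<in>closure_class fa ra \<C>. \<forall>h. hom fa ra A B h \<longrightarrow>
        (\<exists>\<iota>. emb fa ra A U \<iota> \<and> (\<forall>x\<in>s_carrier A. h x = r (\<iota> x)))) \<and>
     (\<forall>A \<iota>. substruc fa ra A U \<and> fin_gen fa ra A \<and> emb fa ra A U \<iota> \<and>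
        (\<forall>x\<in>s_carrier A. r (\<iota> x) = r x) \<longrightarrow>
        (\<exists>\<alpha>. automorphism fa ra U \<alpha> \<and> (\<forall>x\<in>s_carrier U. r (\<alpha> x) = r x) \<and>
             (\<forall>x\<in>s_carrier A. \<alpha> x = \<iota> x)))"

end

theory Submission
  imports Defs
begin

text \<open>
Forward direction.  Given a retraction \<open>e\<close> of \<open>U\<close> onto \<open>B\<close>, build \<open>r : U \<rightarrow> B\<close> as the union of
a chain of homomorphisms from finitely generated substructures of \<open>U\<close> to \<open>B\<close>.  HAP lets us enlarge the
domain of a stage; the amalgamated extension property lets us serve a lifting request: a map
\<open>h : D \<rightarrow> B\<close> from \<open>D \<in> \<C>\<close> together with a partial lift \<open>f\<close> on a finitely generated \<open>P \<le> D\<close>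
(\<open>r \<circ> f = h\<close> on \<open>P\<close>) is extended to an embedding \<open>g : D \<hookrightarrow> U\<close> with \<open>r \<circ> g = h\<close>; composing
with \<open>e\<close> keeps everything inside \<open>B\<close>.  Countably many requests are dovetailed, so the limit \<open>r\<close>
has this lifting property.  Universality then follows by lifting a countable structure along an
increasing chain of finitely generated substructures, and homogeneity by a back-and-forth argument
between finitely generated substructures of \<open>U\<close> respecting \<open>r\<close>.

Backward direction.  \<open>U\<close> is a retract of itself; a universal homogeneous retraction
\<open>r : U \<rightarrow> U\<close> lifts the maps in a HAP (resp. AEP) diagram to embeddings into \<open>U\<close>, homogeneity of
\<open>r\<close> makes the two lifts agree on the common part, and finitely generated substructures of \<open>U\<close>
give the required amalgams.
\<close>

section \<open>Induced and generated substructures\<close>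

definition induced :: "('r \<Rightarrow> nat) \<Rightarrow> ('a, 'f, 'r) struc \<Rightarrow> 'a set \<Rightarrow> ('a, 'f, 'r) struc" where
  "induced ra U S = \<lparr>s_carrier = S, s_fun = s_fun U, s_rel = (\<lambda>r. s_rel U r \<inter> args (ra r) S)\<rparr>"

definition subuniverse :: "('f \<Rightarrow> nat) \<Rightarrow> ('a, 'f, 'r) struc \<Rightarrow> 'a set \<Rightarrow> bool" where
  "subuniverse fa U S \<longleftrightarrow> S \<subseteq> s_carrier U \<and> (\<forall>f. \<forall>xs\<in>args (fa f) S. s_fun U f xs \<in> S)"

definition generated :: "('f \<Rightarrow> nat) \<Rightarrow> ('a, 'f, 'r) struc \<Rightarrow> 'a set \<Rightarrow> 'a set" where
  "generated fa U X = \<Inter>{S. subuniverse fa U S \<and> X \<inter> s_carrier U \<subseteq> S}"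

lemma induced_simps [simp]:
  "s_carrier (induced ra U S) = S" "s_fun (induced ra U S) = s_fun U"
  "s_rel (induced ra U S) r = s_rel U r \<inter> args (ra r) S"
  by (auto simp: induced_def)

lemma args_mono: "S \<subseteq> T \<Longrightarrow> args n S \<subseteq> args n T"
  by (auto simp: args_def)

lemma args_map: "xs \<in> args n S \<Longrightarrow> (\<And>x. x \<in> S \<Longrightarrow> h x \<in> T) \<Longrightarrow> map h xs \<in> args n T"
  by (auto simp: args_def)

lemma args_map_cong: "xs \<in> args n S \<Longrightarrow> (\<And>x. x \<in> S \<Longrightarrow> h x = g x) \<Longrightarrow> map h xs = map g xs"
  by (auto simp: args_def intro!: map_cong)

lemma args_image: "ys \<in> args n (h ` S) \<Longrightarrow> \<exists>xs\<in>args n S. ys = map h xs"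
proof -
  assume ys: "ys \<in> args n (h ` S)"
  let ?xs = "map (inv_into S h) ys"
  have "?xs \<in> args n S" using ys by (auto simp: args_def inv_into_into)
  moreover have "map h ?xs = ys"
    unfolding map_map by (rule map_idI) (use ys in \<open>auto simp: args_def f_inv_into_f\<close>)
  ultimately show ?thesis by metis
qed

context
  fixes fa :: "'f \<Rightarrow> nat" and ra :: "'r \<Rightarrow> nat"
begin

lemma homD:
  assumes "hom fa ra A B h"
  shows "x \<in> s_carrier A \<Longrightarrow> h x \<in> s_carrier B"
    and "xs \<in> args (fa f) (s_carrier A) \<Longrightarrow> h (s_fun A f xs) = s_fun B f (map h xs)"
    and "xs \<in> s_rel A r \<Longrightarrow> map h xs \<in> s_rel B r"
  using assms by (auto simp: hom_def)

lemma emb_hom: "emb fa ra A B f \<Longrightarrow> hom fa ra A B f"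
  by (simp add: emb_def)

lemma emb_inj: "emb fa ra A B f \<Longrightarrow> inj_on f (s_carrier A)"
  by (simp add: emb_def)

lemma emb_reflect:
  "emb fa ra A B f \<Longrightarrow> xs \<in> args (ra r) (s_carrier A) \<Longrightarrow> map f xs \<in> s_rel B r \<Longrightarrow> xs \<in> s_rel A r"
  by (simp add: emb_def)

lemma iso_emb: "iso fa ra A B h \<Longrightarrow> emb fa ra A B h"
  by (simp add: iso_def)

lemma automorphism_emb: "automorphism fa ra U \<alpha> \<Longrightarrow> emb fa ra U U \<alpha>"
  by (simp add: automorphism_def iso_def)

lemma emb_id: "emb fa ra A A id"
  by (auto simp: emb_def hom_def)

lemma iso_id: "iso fa ra A A id"
  by (simp add: iso_def emb_id)

lemma hom_comp:
  assumes f: "hom fa ra A B f" and g: "hom fa ra B C g"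
  shows "hom fa ra A C (g \<circ> f)"
  unfolding hom_def
proof (intro conjI ballI allI)
  fix x assume "x \<in> s_carrier A"
  then show "(g \<circ> f) x \<in> s_carrier C" using homD(1)[OF g homD(1)[OF f]] by simp
next
  fix h xs assume xs: "xs \<in> args (fa h) (s_carrier A)"
  have "map f xs \<in> args (fa h) (s_carrier B)" using args_map[OF xs] homD(1)[OF f] .
  then show "(g \<circ> f) (s_fun A h xs) = s_fun C h (map (g \<circ> f) xs)"
    using homD(2)[OF f xs] homD(2)[OF g] by simp
next
  fix r xs assume "xs \<in> s_rel A r"
  then show "map (g \<circ> f) xs \<in> s_rel C r" using homD(3)[OF g homD(3)[OF f]] by simp
qed

lemma emb_comp:
  assumes f: "emb fa ra A B f" and g: "emb fa ra B C g"
  shows "emb fa ra A C (g \<circ> f)"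
proof -
  have fA: "f ` s_carrier A \<subseteq> s_carrier B" using homD(1)[OF emb_hom[OF f]] by blast
  have "inj_on (g \<circ> f) (s_carrier A)"
    using comp_inj_on[OF emb_inj[OF f] inj_on_subset[OF emb_inj[OF g] fA]] .
  moreover have "xs \<in> s_rel A r"
    if xs: "xs \<in> args (ra r) (s_carrier A)" and gf: "map (g \<circ> f) xs \<in> s_rel C r" for r xs
  proof -
    have "map f xs \<in> args (ra r) (s_carrier B)" using args_map[OF xs] fA by blast
    then have "map f xs \<in> s_rel B r" using emb_reflect[OF g] gf by simp
    then show ?thesis using emb_reflect[OF f xs] by simp
  qed
  ultimately show ?thesis
    using hom_comp[OF emb_hom[OF f] emb_hom[OF g]] unfolding emb_def by blast
qed

lemma iso_comp: "iso fa ra A B f \<Longrightarrow> iso fa ra B C g \<Longrightarrow> iso fa ra A C (g \<circ> f)"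
  unfolding iso_def using emb_comp by (metis image_comp)

lemma hom_inv_into:
  assumes e: "emb fa ra A B h" and im: "h ` s_carrier A = s_carrier B"
    and A: "is_struc fa ra A" and B: "is_struc fa ra B"
  shows "hom fa ra B A (inv_into (s_carrier A) h)"
  unfolding hom_def
proof (intro conjI allI ballI)
  let ?g = "inv_into (s_carrier A) h"
  have g_into: "?g y \<in> s_carrier A" if "y \<in> s_carrier B" for y
    using im inv_into_into[of y h "s_carrier A"] that by simp
  have g_args: "map ?g ys \<in> args n (s_carrier A)" if "ys \<in> args n (s_carrier B)" for ys n
    using args_map[OF that g_into] .
  have h_g_args: "map h (map ?g ys) = ys" if "ys \<in> args n (s_carrier B)" for ys n
    using im f_inv_into_f[of _ h "s_carrier A"] that by (auto simp: args_def intro!: map_idI)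
  show "?g y \<in> s_carrier A" if "y \<in> s_carrier B" for y using g_into[OF that] .
  fix f ys assume ys: "ys \<in> args (fa f) (s_carrier B)"
  have "h (s_fun A f (map ?g ys)) = s_fun B f ys"
    using homD(2)[OF emb_hom[OF e] g_args[OF ys]] h_g_args[OF ys] by simp
  moreover have "s_fun A f (map ?g ys) \<in> s_carrier A"
    using A g_args[OF ys] by (simp add: is_struc_def)
  ultimately show "?g (s_fun B f ys) = s_fun A f (map ?g ys)"
    using emb_inj[OF e] by (metis inv_into_f_f)
next
  let ?g = "inv_into (s_carrier A) h"
  fix r ys assume ys: "ys \<in> s_rel B r"
  then have ys': "ys \<in> args (ra r) (s_carrier B)" using B by (auto simp: is_struc_def)
  then have "map ?g ys \<in> args (ra r) (s_carrier A)"
    using args_map im inv_into_into[of _ h "s_carrier A"] by (metis)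
  moreover have "map h (map ?g ys) = ys"
    using im f_inv_into_f[of _ h "s_carrier A"] ys' by (auto simp: args_def intro!: map_idI)
  ultimately show "map ?g ys \<in> s_rel A r" using emb_reflect[OF e] ys by simp
qed

lemma iso_inverse:
  assumes i: "iso fa ra A B h" and A: "is_struc fa ra A" and B: "is_struc fa ra B"
  obtains g where "iso fa ra B A g" "\<forall>x\<in>s_carrier A. g (h x) = x"
proof
  let ?g = "inv_into (s_carrier A) h"
  have e: "emb fa ra A B h" and im: "h ` s_carrier A = s_carrier B" using i by (auto simp: iso_def)
  show g_h: "\<forall>x\<in>s_carrier A. ?g (h x) = x" using emb_inj[OF e] by simp
  have h_g: "\<forall>y\<in>s_carrier B. h (?g y) = y" using im f_inv_into_f[of _ h "s_carrier A"] by simp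
  have reflect: "xs \<in> s_rel B r"
    if xs: "xs \<in> args (ra r) (s_carrier B)" and "map ?g xs \<in> s_rel A r" for r xs
  proof -
    have "map h (map ?g xs) = xs" using h_g xs by (auto simp: args_def intro!: map_idI)
    then show ?thesis using homD(3)[OF emb_hom[OF e] that(2)] by simp
  qed
  have "?g ` s_carrier B = (\<lambda>x. ?g (h x)) ` s_carrier A"
    unfolding im[symmetric] image_image ..
  also have "\<dots> = id ` s_carrier A" using g_h by (intro image_cong) auto
  finally have "?g ` s_carrier B = s_carrier A" by simp
  with reflect show "iso fa ra B A ?g"
    using hom_inv_into[OF e im A B] im inj_on_inv_into[of "s_carrier B" h "s_carrier A"]
    unfolding iso_def emb_def by simp
qed

lemma induced_is_struc: "subuniverse fa U S \<Longrightarrow> is_struc fa ra (induced ra U S)"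
  by (auto simp: is_struc_def subuniverse_def)

lemma induced_substruc: "subuniverse fa U S \<Longrightarrow> substruc fa ra (induced ra U S) U"
  using induced_is_struc by (auto simp: substruc_def emb_def hom_def subuniverse_def)

lemma substruc_fun:
  assumes "substruc fa ra B A" "xs \<in> args (fa f) (s_carrier B)"
  shows "s_fun B f xs = s_fun A f xs"
  using homD(2)[OF emb_hom, of B A id xs f] assms by (simp add: substruc_def)

lemma substruc_subuniverse:
  assumes "substruc fa ra B A"
  shows "subuniverse fa A (s_carrier B)"
proof -
  have "s_carrier B \<subseteq> s_carrier A" and st: "is_struc fa ra B" using assms by (auto simp: substruc_def)
  moreover have "s_fun A f xs \<in> s_carrier B" if "xs \<in> args (fa f) (s_carrier B)" for f xs
  proof -
    have "s_fun B f xs \<in> s_carrier B" using st that unfolding is_struc_def by blast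
    then show ?thesis using substruc_fun[OF assms that] by simp
  qed
  ultimately show ?thesis by (simp add: subuniverse_def)
qed

lemma substruc_refl: "is_struc fa ra A \<Longrightarrow> substruc fa ra A A"
  by (simp add: substruc_def emb_id)

lemma substruc_trans: "substruc fa ra X B \<Longrightarrow> substruc fa ra B U \<Longrightarrow> substruc fa ra X U"
  using emb_comp[of X B id U id] by (auto simp: substruc_def)

lemma substruc_agrees:
  assumes s: "substruc fa ra A U"
  shows "xs \<in> args (fa f) (s_carrier A) \<Longrightarrow> s_fun U f xs = s_fun A f xs"
    and "xs \<in> args (ra r) (s_carrier A) \<Longrightarrow> xs \<in> s_rel U r \<longleftrightarrow> xs \<in> s_rel A r"
    and "s_rel A r \<subseteq> args (ra r) (s_carrier A)"
proof -
  have e: "emb fa ra A U id" and st: "is_struc fa ra A" using s by (auto simp: substruc_def)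
  show "xs \<in> args (fa f) (s_carrier A) \<Longrightarrow> s_fun U f xs = s_fun A f xs"
    using substruc_fun[OF s] by simp
  show "xs \<in> args (ra r) (s_carrier A) \<Longrightarrow> xs \<in> s_rel U r \<longleftrightarrow> xs \<in> s_rel A r"
    using emb_reflect[OF e] homD(3)[OF emb_hom[OF e], of xs r] by auto
  show "s_rel A r \<subseteq> args (ra r) (s_carrier A)"
    using st by (simp add: is_struc_def)
qed

lemma iso_substruc_induced:
  assumes "substruc fa ra A U"
  shows "iso fa ra A (induced ra U (s_carrier A)) id"
  using substruc_agrees[OF assms] by (auto simp: iso_def emb_def hom_def) blast+

lemma iso_induced_substruc:
  assumes "substruc fa ra A U"
  shows "iso fa ra (induced ra U (s_carrier A)) A id"
  using substruc_agrees[OF assms] by (auto simp: iso_def emb_def hom_def)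

lemma hom_into_induced: "is_struc fa ra X \<Longrightarrow> S \<subseteq> s_carrier U \<Longrightarrow>
   hom fa ra X (induced ra U S) h \<longleftrightarrow> hom fa ra X U h \<and> h ` s_carrier X \<subseteq> S"
  unfolding hom_def is_struc_def
  apply (auto simp: args_def)
  apply blast
  done

lemma hom_into_substruc:
  assumes B: "substruc fa ra B U" and X: "is_struc fa ra X"
  shows "hom fa ra X B h \<longleftrightarrow> hom fa ra X U h \<and> h ` s_carrier X \<subseteq> s_carrier B"
proof -
  have BU: "s_carrier B \<subseteq> s_carrier U" using B by (simp add: substruc_def)
  have "hom fa ra X B h \<longleftrightarrow> hom fa ra X (induced ra U (s_carrier B)) h"
  proof
    assume "hom fa ra X B h"
    then show "hom fa ra X (induced ra U (s_carrier B)) h"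
      using hom_comp[OF _ emb_hom[OF iso_emb[OF iso_substruc_induced[OF B]]]] by simp
  next
    assume "hom fa ra X (induced ra U (s_carrier B)) h"
    then show "hom fa ra X B h"
      using hom_comp[OF _ emb_hom[OF iso_emb[OF iso_induced_substruc[OF B]]]] by simp
  qed
  then show ?thesis using hom_into_induced[OF X BU] by simp
qed

lemma emb_into_induced: "is_struc fa ra X \<Longrightarrow> S \<subseteq> s_carrier U \<Longrightarrow>
   emb fa ra X (induced ra U S) h \<longleftrightarrow> emb fa ra X U h \<and> h ` s_carrier X \<subseteq> S"
proof -
  assume a: "is_struc fa ra X" "S \<subseteq> s_carrier U"
  have r: "\<And>r xs. xs \<in> args (ra r) (s_carrier X) \<Longrightarrow> h ` s_carrier X \<subseteq> S \<Longrightarrow> map h xs \<in> args (ra r) S"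
    by (auto simp: args_def)
  show ?thesis
    unfolding emb_def hom_into_induced[OF a] using r by auto
qed

lemma hom_induced: "S \<subseteq> s_carrier U \<Longrightarrow> hom fa ra U Y h \<Longrightarrow> hom fa ra (induced ra U S) Y h"
proof -
  assume S: "S \<subseteq> s_carrier U" and h: "hom fa ra U Y h"
  show ?thesis unfolding hom_def
  proof (intro conjI ballI allI)
    fix x assume "x \<in> s_carrier (induced ra U S)" then show "h x \<in> s_carrier Y" using S homD(1)[OF h] by auto
  next
    fix f xs assume "xs \<in> args (fa f) (s_carrier (induced ra U S))"
    then have "xs \<in> args (fa f) (s_carrier U)" using args_mono[OF S] by auto
    then show "h (s_fun (induced ra U S) f xs) = s_fun Y f (map h xs)" using homD(2)[OF h] by simp
  next
    fix r xs assume "xs \<in> s_rel (induced ra U S) r"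
    then show "map h xs \<in> s_rel Y r" using homD(3)[OF h] by simp
  qed
qed

lemma emb_induced: "S \<subseteq> s_carrier U \<Longrightarrow> emb fa ra U Y h \<Longrightarrow> emb fa ra (induced ra U S) Y h"
proof -
  assume a: "S \<subseteq> s_carrier U" "emb fa ra U Y h"
  have "hom fa ra (induced ra U S) Y h" using hom_induced[OF a(1) emb_hom[OF a(2)]] .
  moreover have "inj_on h S" using inj_on_subset[OF emb_inj[OF a(2)] a(1)] .
  moreover have "\<forall>r. \<forall>xs\<in>args (ra r) S. map h xs \<in> s_rel Y r \<longrightarrow> xs \<in> s_rel U r"
  proof (intro allI ballI impI)
    fix r xs assume "xs \<in> args (ra r) S" "map h xs \<in> s_rel Y r"
    moreover have "args (ra r) S \<subseteq> args (ra r) (s_carrier U)" using args_mono[OF a(1)] .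
    ultimately show "xs \<in> s_rel U r" using a(2) unfolding emb_def by blast
  qed
  ultimately show ?thesis unfolding emb_def by simp
qed

lemma induced_induced: "P \<subseteq> Q \<Longrightarrow> induced ra (induced ra U Q) P = induced ra U P"
proof -
  assume "P \<subseteq> Q"
  then have "\<And>r. args (ra r) P \<subseteq> args (ra r) Q" by (rule args_mono)
  then show ?thesis by (auto simp: induced_def)
qed

lemma induced_self: "is_struc fa ra U \<Longrightarrow> induced ra U (s_carrier U) = U"
proof -
  assume "is_struc fa ra U"
  then have "\<And>r. s_rel U r \<inter> args (ra r) (s_carrier U) = s_rel U r" by (auto simp: is_struc_def)
  then show ?thesis by (simp add: induced_def)
qed

lemma generated_subuniverse: "is_struc fa ra U \<Longrightarrow> subuniverse fa U (generated fa U X)"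
proof -
  assume st: "is_struc fa ra U"
  have c: "subuniverse fa U (s_carrier U)" using st by (simp add: is_struc_def subuniverse_def)
  show ?thesis unfolding subuniverse_def
  proof (intro conjI allI ballI)
    show "generated fa U X \<subseteq> s_carrier U" using c by (auto simp: generated_def)
    fix f xs assume xs: "xs \<in> args (fa f) (generated fa U X)"
    show "s_fun U f xs \<in> generated fa U X" unfolding generated_def
    proof
      fix S assume S: "S \<in> {S. subuniverse fa U S \<and> X \<inter> s_carrier U \<subseteq> S}"
      have "generated fa U X \<subseteq> S" using S by (auto simp: generated_def)
      then have "xs \<in> args (fa f) S" using xs args_mono by blast
      then show "s_fun U f xs \<in> S" using S by (simp add: subuniverse_def)
    qed
  qed
qed

lemma generated_least: "subuniverse fa U S \<Longrightarrow> X \<inter> s_carrier U \<subseteq> S \<Longrightarrow> generated fa U X \<subseteq> S"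
  by (auto simp: generated_def)

lemma generated_superset: "X \<subseteq> s_carrier U \<Longrightarrow> X \<subseteq> generated fa U X"
  by (auto simp: generated_def)

lemma generated_subset: "is_struc fa ra U \<Longrightarrow> generated fa U X \<subseteq> s_carrier U"
proof -
  assume "is_struc fa ra U" then have "subuniverse fa U (generated fa U X)" by (rule generated_subuniverse)
  then show ?thesis by (simp add: subuniverse_def)
qed

lemma generated_mono: "X \<subseteq> Y \<Longrightarrow> generated fa U X \<subseteq> generated fa U Y"
  unfolding generated_def by (rule Inter_anti_mono) blast

lemma generated_induced: "is_struc fa ra U \<Longrightarrow> subuniverse fa U V \<Longrightarrow> G \<subseteq> V \<Longrightarrow> generated fa (induced ra U V) G = generated fa U G"
proof
  assume st: "is_struc fa ra U" and c: "subuniverse fa U V" and G: "G \<subseteq> V"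
  have sr: "is_struc fa ra (induced ra U V)" using c by (rule induced_is_struc)
  have "generated fa U G \<subseteq> V" using generated_least[OF c] G by blast
  then have "subuniverse fa (induced ra U V) (generated fa U G)" using generated_subuniverse[OF st] by (simp add: subuniverse_def)
  moreover have "G \<inter> V \<subseteq> generated fa U G" using G generated_superset[of G U] c by (auto simp: subuniverse_def)
  ultimately show "generated fa (induced ra U V) G \<subseteq> generated fa U G" using generated_least[of "induced ra U V"] by simp
  have "subuniverse fa U (generated fa (induced ra U V) G)" using generated_subuniverse[OF sr, of G] c by (auto simp: subuniverse_def)
  moreover have "G \<inter> s_carrier U \<subseteq> generated fa (induced ra U V) G"
    using generated_superset[of G "induced ra U V"] G by auto
  ultimately show "generated fa U G \<subseteq> generated fa (induced ra U V) G" by (rule generated_least)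
qed

lemma hom_image_subuniverse: "hom fa ra X U h \<Longrightarrow> is_struc fa ra X \<Longrightarrow> subuniverse fa U (h ` s_carrier X)"
  unfolding subuniverse_def
proof (intro conjI allI ballI)
  assume h: "hom fa ra X U h" and sx: "is_struc fa ra X"
  show "h ` s_carrier X \<subseteq> s_carrier U" using homD(1)[OF h] by blast
  fix f ys assume "ys \<in> args (fa f) (h ` s_carrier X)"
  then obtain xs where xs: "xs \<in> args (fa f) (s_carrier X)" "ys = map h xs" using args_image by blast
  have "s_fun X f xs \<in> s_carrier X" using sx xs by (simp add: is_struc_def)
  then show "s_fun U f ys \<in> h ` s_carrier X" using homD(2)[OF h xs(1)] xs(2) by (metis image_eqI)
qed

lemma iso_image_induced: "emb fa ra X U h \<Longrightarrow> is_struc fa ra X \<Longrightarrow> iso fa ra X (induced ra U (h ` s_carrier X)) h"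
proof -
  assume e: "emb fa ra X U h" and sx: "is_struc fa ra X"
  have "h ` s_carrier X \<subseteq> s_carrier U" using homD(1)[OF emb_hom[OF e]] by blast
  then have "emb fa ra X (induced ra U (h ` s_carrier X)) h" using emb_into_induced[OF sx] e by blast
  then show ?thesis by (simp add: iso_def)
qed

lemma hom_image_generated:
  assumes h: "hom fa ra X Y h" and sx: "is_struc fa ra X" and sy: "is_struc fa ra Y"
    and G: "G \<subseteq> s_carrier X"
  shows "h ` generated fa X G = generated fa Y (h ` G)"
proof
  let ?P = "{x\<in>s_carrier X. h x \<in> generated fa Y (h ` G)}"
  have "subuniverse fa X ?P" unfolding subuniverse_def
  proof (intro conjI allI ballI)
    show "?P \<subseteq> s_carrier X" by blast
    fix f xs assume xs: "xs \<in> args (fa f) ?P"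
    have xs': "xs \<in> args (fa f) (s_carrier X)" using xs args_mono[of ?P] by blast
    have "s_fun X f xs \<in> s_carrier X" using sx xs' by (simp add: is_struc_def)
    moreover have "h (s_fun X f xs) = s_fun Y f (map h xs)" using homD(2)[OF h xs'] .
    moreover have "map h xs \<in> args (fa f) (generated fa Y (h ` G))"
      using xs args_map[of xs "fa f" ?P h] by blast
    ultimately show "s_fun X f xs \<in> ?P"
      using generated_subuniverse[OF sy] by (simp add: subuniverse_def)
  qed
  moreover have "G \<inter> s_carrier X \<subseteq> ?P"
    using G homD(1)[OF h] generated_superset[of "h ` G"] by blast
  ultimately have "generated fa X G \<subseteq> ?P" by (rule generated_least)
  then show "h ` generated fa X G \<subseteq> generated fa Y (h ` G)" by blast
  have gX: "subuniverse fa X (generated fa X G)" using generated_subuniverse[OF sx] .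
  have "subuniverse fa Y (h ` generated fa X G)"
    using hom_image_subuniverse[OF hom_induced[OF _ h] induced_is_struc[OF gX]] gX
    by (simp add: subuniverse_def)
  moreover have "h ` G \<inter> s_carrier Y \<subseteq> h ` generated fa X G"
    using generated_superset[OF G] by blast
  ultimately show "generated fa Y (h ` G) \<subseteq> h ` generated fa X G" by (rule generated_least)
qed

lemma hom_image_generated_carrier:
  assumes "hom fa ra X Y h" "is_struc fa ra X" "is_struc fa ra Y"
    and "G \<subseteq> s_carrier X" "generated fa X G = s_carrier X"
  shows "h ` s_carrier X = generated fa Y (h ` G)"
  using hom_image_generated[OF assms(1-4)] assms(5) by simp

lemma hom_eq_on_generated: "hom fa ra X Y h \<Longrightarrow> hom fa ra X Y g \<Longrightarrow> is_struc fa ra X \<Longrightarrow>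
  (\<And>x. x \<in> G \<Longrightarrow> x \<in> s_carrier X \<Longrightarrow> h x = g x) \<Longrightarrow> x \<in> generated fa X G \<Longrightarrow> h x = g x"
proof -
  assume h: "hom fa ra X Y h" and g: "hom fa ra X Y g" and sx: "is_struc fa ra X"
    and e: "\<And>x. x \<in> G \<Longrightarrow> x \<in> s_carrier X \<Longrightarrow> h x = g x" and x: "x \<in> generated fa X G"
  let ?P = "{x\<in>s_carrier X. h x = g x}"
  have "subuniverse fa X ?P" unfolding subuniverse_def
  proof (intro conjI allI ballI)
    show "?P \<subseteq> s_carrier X" by blast
    fix f xs assume xs: "xs \<in> args (fa f) ?P"
    have xs': "xs \<in> args (fa f) (s_carrier X)" using xs args_mono[of ?P] by blast
    have "s_fun X f xs \<in> s_carrier X" using sx xs' by (simp add: is_struc_def)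
    moreover have "h (s_fun X f xs) = s_fun Y f (map h xs)" using homD(2)[OF h xs'] .
    moreover have "g (s_fun X f xs) = s_fun Y f (map g xs)" using homD(2)[OF g xs'] .
    moreover have "map h xs = map g xs" using xs args_map_cong[of xs "fa f" ?P h g] by blast
    ultimately show "s_fun X f xs \<in> ?P" by simp
  qed
  moreover have "G \<inter> s_carrier X \<subseteq> ?P" using e by blast
  ultimately have "generated fa X G \<subseteq> ?P" by (rule generated_least)
  then show ?thesis using x by blast
qed

lemma fin_gen_generated: "is_struc fa ra U \<Longrightarrow> finite F \<Longrightarrow> F \<subseteq> s_carrier U \<Longrightarrow>
  fin_gen fa ra (induced ra U (generated fa U F))"
  unfolding fin_gen_def
proof (intro exI conjI allI impI)
  assume st: "is_struc fa ra U" and F: "finite F" "F \<subseteq> s_carrier U"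
  show "finite F" by fact
  show "F \<subseteq> s_carrier (induced ra U (generated fa U F))" using generated_superset[OF F(2)] by simp
  fix B assume B: "substruc fa ra B (induced ra U (generated fa U F)) \<and> F \<subseteq> s_carrier B"
  have cB: "subuniverse fa (induced ra U (generated fa U F)) (s_carrier B)" using B substruc_subuniverse by blast
  have "subuniverse fa U (s_carrier B)" using cB generated_subset[OF st, of F] by (auto simp: subuniverse_def)
  then have "generated fa U F \<subseteq> s_carrier B" using B generated_least by blast
  moreover have "s_carrier B \<subseteq> generated fa U F" using cB by (simp add: subuniverse_def)
  ultimately show "s_carrier B = s_carrier (induced ra U (generated fa U F))" by simp
qed

lemma substruc_fin_gen_generated: "is_struc fa ra U \<Longrightarrow> substruc fa ra A U \<Longrightarrow> fin_gen fa ra A \<Longrightarrow>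
  \<exists>F. finite F \<and> F \<subseteq> s_carrier A \<and> s_carrier A = generated fa U F"
proof -
  assume st: "is_struc fa ra U" and s: "substruc fa ra A U" and fg: "fin_gen fa ra A"
  obtain F where F: "finite F" "F \<subseteq> s_carrier A"
    and m: "\<And>B. substruc fa ra B A \<and> F \<subseteq> s_carrier B \<Longrightarrow> s_carrier B = s_carrier A"
    using fg unfolding fin_gen_def by blast
  have cA: "subuniverse fa U (s_carrier A)" using s by (rule substruc_subuniverse)
  have g1: "generated fa U F \<subseteq> s_carrier A" using generated_least[OF cA] F by blast
  have "subuniverse fa A (generated fa U F)" unfolding subuniverse_def
  proof (intro conjI allI ballI)
    show "generated fa U F \<subseteq> s_carrier A" by (rule g1)
    fix f xs assume xs: "xs \<in> args (fa f) (generated fa U F)"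
    have "xs \<in> args (fa f) (s_carrier A)" using xs args_mono[OF g1] by blast
    then have "s_fun A f xs = s_fun U f xs" using substruc_fun[OF s] by blast
    then show "s_fun A f xs \<in> generated fa U F" using generated_subuniverse[OF st] xs by (simp add: subuniverse_def)
  qed
  then have "substruc fa ra (induced ra A (generated fa U F)) A" by (rule induced_substruc)
  moreover have "F \<subseteq> generated fa U F" using generated_superset[of F U] F cA by (auto simp: subuniverse_def)
  ultimately have "generated fa U F = s_carrier A" using m[of "induced ra A (generated fa U F)"] by simp
  then show ?thesis using F by blast
qed

lemma fin_gen_iff: "is_struc fa ra X \<Longrightarrow>
  fin_gen fa ra X \<longleftrightarrow> (\<exists>F. finite F \<and> F \<subseteq> s_carrier X \<and> generated fa X F = s_carrier X)"
proof
  assume st: "is_struc fa ra X"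
  show "fin_gen fa ra X \<Longrightarrow> \<exists>F. finite F \<and> F \<subseteq> s_carrier X \<and> generated fa X F = s_carrier X"
    using substruc_fin_gen_generated[OF st substruc_refl[OF st]] by metis
  assume "\<exists>F. finite F \<and> F \<subseteq> s_carrier X \<and> generated fa X F = s_carrier X"
  then obtain F where F: "finite F" "F \<subseteq> s_carrier X" "generated fa X F = s_carrier X" by blast
  have "fin_gen fa ra (induced ra X (generated fa X F))" using fin_gen_generated[OF st F(1,2)] .
  then show "fin_gen fa ra X" using F(3) induced_self[OF st] by simp
qed

lemma fin_gen_iso:
  assumes i: "iso fa ra X Y h" and sx: "is_struc fa ra X" and sy: "is_struc fa ra Y"
    and fg: "fin_gen fa ra X"
  shows "fin_gen fa ra Y"
proof -
  obtain F where F: "finite F" "F \<subseteq> s_carrier X" "generated fa X F = s_carrier X"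
    using fg fin_gen_iff[OF sx] by blast
  have h: "hom fa ra X Y h" and im: "h ` s_carrier X = s_carrier Y"
    using i by (auto simp: iso_def emb_def)
  have "generated fa Y (h ` F) = s_carrier Y"
    using hom_image_generated_carrier[OF h sx sy F(2,3)] im by simp
  then show ?thesis using fin_gen_iff[OF sy] F(1,2) im by blast
qed

end

definition fg_subuniverse :: "('f \<Rightarrow> nat) \<Rightarrow> ('a, 'f, 'r) struc \<Rightarrow> 'a set \<Rightarrow> bool" where
  "fg_subuniverse fa U V \<longleftrightarrow> (\<exists>F. finite F \<and> F \<subseteq> s_carrier U \<and> V = generated fa U F)"

context
  fixes fa :: "'f \<Rightarrow> nat" and ra :: "'r \<Rightarrow> nat" and U :: "('a, 'f, 'r) struc"
  assumes U: "is_struc fa ra U"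
begin

lemma fg_subuniverse_subuniverse: "fg_subuniverse fa U V \<Longrightarrow> subuniverse fa U V"
  unfolding fg_subuniverse_def using generated_subuniverse[OF U] by blast

lemma fg_subuniverse_subset: "fg_subuniverse fa U V \<Longrightarrow> V \<subseteq> s_carrier U"
  using fg_subuniverse_subuniverse by (simp add: subuniverse_def)

lemma fg_subuniverse_induced_is_struc: "fg_subuniverse fa U V \<Longrightarrow> is_struc fa ra (induced ra U V)"
  using induced_is_struc fg_subuniverse_subuniverse by blast

lemma fg_subuniverse_substruc: "fg_subuniverse fa U V \<Longrightarrow> substruc fa ra (induced ra U V) U"
  using induced_substruc fg_subuniverse_subuniverse by blast

lemma fg_subuniverse_fin_gen: "fg_subuniverse fa U V \<Longrightarrow> fin_gen fa ra (induced ra U V)"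
  unfolding fg_subuniverse_def using fin_gen_generated[OF U] by blast

lemma fg_subuniverse_hom_image:
  assumes X: "is_struc fa ra X" "fin_gen fa ra X" and h: "hom fa ra X U h"
  shows "fg_subuniverse fa U (h ` s_carrier X)"
proof -
  obtain G where G: "finite G" "G \<subseteq> s_carrier X" "generated fa X G = s_carrier X"
    using fin_gen_iff[OF X(1)] X(2) by blast
  have "h ` s_carrier X = generated fa U (h ` G)"
    using hom_image_generated_carrier[OF h X(1) U G(2,3)] .
  then show ?thesis
    unfolding fg_subuniverse_def using G homD(1)[OF h] by blast
qed

lemma fg_subuniverse_generated: "finite F \<Longrightarrow> F \<subseteq> s_carrier U \<Longrightarrow> fg_subuniverse fa U (generated fa U F)"
  unfolding fg_subuniverse_def by blast

lemma fg_subuniverse_point: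
  "fg_subuniverse fa U (generated fa U ({n} \<inter> s_carrier U))"
  "n \<in> s_carrier U \<Longrightarrow> n \<in> generated fa U ({n} \<inter> s_carrier U)"
  using fg_subuniverse_generated[of "{n} \<inter> s_carrier U"] generated_superset[of "{n} \<inter> s_carrier U" U]
  by auto

lemma fg_subuniverse_union:
  assumes V: "fg_subuniverse fa U V" and W: "fg_subuniverse fa U W"
  shows "fg_subuniverse fa U (generated fa U (V \<union> W))"
    and "V \<subseteq> generated fa U (V \<union> W)" "W \<subseteq> generated fa U (V \<union> W)"
proof -
  obtain F where F: "finite F" "F \<subseteq> s_carrier U" "V = generated fa U F"
    using V by (auto simp: fg_subuniverse_def)
  obtain G where G: "finite G" "G \<subseteq> s_carrier U" "W = generated fa U G"
    using W by (auto simp: fg_subuniverse_def)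
  have FG: "F \<union> G \<subseteq> s_carrier U" using F(2) G(2) by blast
  have "V \<union> W \<subseteq> generated fa U (F \<union> G)"
    unfolding F(3) G(3) by (intro Un_least generated_mono) auto
  then have "generated fa U (V \<union> W) \<subseteq> generated fa U (F \<union> G)"
    using generated_least[OF generated_subuniverse[OF U]] by blast
  moreover have "generated fa U (F \<union> G) \<subseteq> generated fa U (V \<union> W)"
    using generated_superset[OF F(2)] generated_superset[OF G(2)] F(3) G(3)
    by (intro generated_mono) blast
  ultimately have "generated fa U (V \<union> W) = generated fa U (F \<union> G)" by (rule antisym)
  then show "fg_subuniverse fa U (generated fa U (V \<union> W))"
    using fg_subuniverse_generated F(1) G(1) FG by simp
  show "V \<subseteq> generated fa U (V \<union> W)" "W \<subseteq> generated fa U (V \<union> W)"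
    using generated_superset[of "V \<union> W"] fg_subuniverse_subset[OF V]
      fg_subuniverse_subset[OF W] by auto
qed

end

section \<open>Unions of chains\<close>

definition chain_limit :: "(nat \<Rightarrow> nat \<Rightarrow> 'a) \<Rightarrow> nat \<Rightarrow> 'a" where
  "chain_limit k x = k (Suc x) x"

text \<open>Since \<open>x\<close> has appeared by stage \<open>Suc x\<close>, \<open>chain_limit k\<close> is the union of a compatible
family of maps \<open>k n\<close> defined on the stages.\<close>

locale subuniverse_chain =
  fixes fa :: "'f \<Rightarrow> nat" and ra :: "'r \<Rightarrow> nat" and X :: "('f, 'r) cstruc" and Q :: "nat \<Rightarrow> nat set"
  assumes X_struc: "is_struc fa ra X"
    and Q_subuniverse: "\<And>n. subuniverse fa X (Q n)"
    and Q_Suc: "\<And>n. Q n \<subseteq> Q (Suc n)"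
    and Q_cover: "\<And>x. x \<in> s_carrier X \<Longrightarrow> x \<in> Q (Suc x)"
begin

lemma Q_mono: "m \<le> n \<Longrightarrow> Q m \<subseteq> Q n"
  using lift_Suc_mono_le[of Q] Q_Suc by blast

lemma Q_subset: "Q n \<subseteq> s_carrier X"
  using Q_subuniverse by (simp add: subuniverse_def)

lemma finite_subset_stage:
  assumes "finite Y" "Y \<subseteq> s_carrier X"
  shows "Y \<subseteq> Q (Suc (Max (insert 0 Y)))"
proof
  fix y assume y: "y \<in> Y"
  then have "Suc y \<le> Suc (Max (insert 0 Y))" using assms(1) by simp
  then show "y \<in> Q (Suc (Max (insert 0 Y)))" using Q_cover Q_mono y assms(2) by blast
qed

context
  fixes k :: "nat \<Rightarrow> nat \<Rightarrow> 'a"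
  assumes k_Suc: "\<And>n x. x \<in> Q n \<Longrightarrow> k (Suc n) x = k n x"
begin

lemma k_stable: "m \<le> n \<Longrightarrow> x \<in> Q m \<Longrightarrow> k n x = k m x"
proof (induction n rule: dec_induct)
  case (step n)
  then show ?case using k_Suc Q_mono by (metis subsetD)
qed simp

lemma chain_limit_eq:
  assumes "x \<in> Q n"
  shows "chain_limit k x = k n x"
proof -
  have "x \<in> Q (Suc x)" using assms Q_cover Q_subset by blast
  then have "k (max n (Suc x)) x = k (Suc x) x" by (simp add: k_stable)
  moreover have "k (max n (Suc x)) x = k n x" using assms by (simp add: k_stable)
  ultimately show ?thesis unfolding chain_limit_def by simp
qed

lemma map_chain_limit: "set xs \<subseteq> Q n \<Longrightarrow> map (chain_limit k) xs = map (k n) xs"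
  using chain_limit_eq by (auto intro!: map_cong)

lemma chain_limit_hom:
  assumes k: "\<And>n. hom fa ra (induced ra X (Q n)) W (k n)"
  shows "hom fa ra X W (chain_limit k)"
  unfolding hom_def
proof (intro conjI ballI allI)
  fix x assume "x \<in> s_carrier X"
  then show "chain_limit k x \<in> s_carrier W"
    using homD(1)[OF k] Q_cover chain_limit_eq by (metis induced_simps(1))
next
  fix f xs assume xs: "xs \<in> args (fa f) (s_carrier X)"
  define N where "N = Suc (Max (insert 0 (set xs)))"
  have N: "set xs \<subseteq> Q N" using finite_subset_stage xs unfolding N_def by (auto simp: args_def)
  then have xsN: "xs \<in> args (fa f) (s_carrier (induced ra X (Q N)))" using xs by (simp add: args_def)
  then have "s_fun X f xs \<in> Q N" using Q_subuniverse by (simp add: subuniverse_def)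
  then have "chain_limit k (s_fun X f xs) = k N (s_fun X f xs)" by (rule chain_limit_eq)
  also have "\<dots> = s_fun W f (map (k N) xs)" using homD(2)[OF k xsN] by simp
  also have "map (k N) xs = map (chain_limit k) xs" using map_chain_limit[OF N] by (rule sym)
  finally show "chain_limit k (s_fun X f xs) = s_fun W f (map (chain_limit k) xs)" .
next
  fix r xs assume xs: "xs \<in> s_rel X r"
  then have xa: "xs \<in> args (ra r) (s_carrier X)" using X_struc by (auto simp: is_struc_def)
  define N where "N = Suc (Max (insert 0 (set xs)))"
  have N: "set xs \<subseteq> Q N" using finite_subset_stage xa unfolding N_def by (auto simp: args_def)
  then have "xs \<in> s_rel (induced ra X (Q N)) r" using xs xa by (simp add: args_def)
  then show "map (chain_limit k) xs \<in> s_rel W r"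
    using homD(3)[OF k] map_chain_limit[OF N] by metis
qed

lemma chain_limit_emb:
  assumes k: "\<And>n. emb fa ra (induced ra X (Q n)) W (k n)"
  shows "emb fa ra X W (chain_limit k)"
proof -
  have "inj_on (chain_limit k) (s_carrier X)"
  proof (rule inj_onI)
    fix x y assume x: "x \<in> s_carrier X" and y: "y \<in> s_carrier X"
      and eq: "chain_limit k x = chain_limit k y"
    define N where "N = Suc (Max {0, x, y})"
    have N: "{x, y} \<subseteq> Q N" using finite_subset_stage[of "{x, y}"] x y unfolding N_def by auto
    then show "x = y"
      using eq chain_limit_eq inj_onD[OF emb_inj[OF k[of N]]] by auto
  qed
  moreover have "xs \<in> s_rel X r"
    if xa: "xs \<in> args (ra r) (s_carrier X)" and m: "map (chain_limit k) xs \<in> s_rel W r" for r xs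
  proof -
    define N where "N = Suc (Max (insert 0 (set xs)))"
    have N: "set xs \<subseteq> Q N" using finite_subset_stage xa unfolding N_def by (auto simp: args_def)
    have "xs \<in> args (ra r) (s_carrier (induced ra X (Q N)))" using xa N by (simp add: args_def)
    then have "xs \<in> s_rel (induced ra X (Q N)) r"
      using k[of N] m map_chain_limit[OF N] unfolding emb_def by metis
    then show ?thesis by simp
  qed
  ultimately show ?thesis
    using chain_limit_hom[OF emb_hom[OF k]] unfolding emb_def by blast
qed

end

end

lemma initial_segments_chain:
  assumes A: "is_struc fa ra A"
  shows "subuniverse_chain fa ra A (\<lambda>n. generated fa A {x \<in> s_carrier A. x < n})"
proof
  show "subuniverse fa A (generated fa A {x \<in> s_carrier A. x < n})" for n
    using generated_subuniverse[OF A] .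
  show "generated fa A {x \<in> s_carrier A. x < n} \<subseteq> generated fa A {x \<in> s_carrier A. x < Suc n}" for n
    by (rule generated_mono) auto
  show "x \<in> generated fa A {y \<in> s_carrier A. y < Suc x}" if "x \<in> s_carrier A" for x
    using generated_superset[of "{y \<in> s_carrier A. y < Suc x}" A fa] that by blast
qed (rule A)

section \<open>The lifting property\<close>

definition lifting_property :: "('f \<Rightarrow> nat) \<Rightarrow> ('r \<Rightarrow> nat) \<Rightarrow> ('a, 'f, 'r) struc \<Rightarrow> ('b, 'f, 'r) struc
    \<Rightarrow> ('a \<Rightarrow> 'b) \<Rightarrow> ('c, 'f, 'r) struc \<Rightarrow> bool" where
  "lifting_property fa ra U B r D \<longleftrightarrow>
     (\<forall>F h f. finite F \<and> F \<subseteq> s_carrier D \<and> hom fa ra D B h \<and>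
        emb fa ra (induced ra D (generated fa D F)) U f \<and> (\<forall>x\<in>generated fa D F. r (f x) = h x) \<longrightarrow>
        (\<exists>g. emb fa ra D U g \<and> (\<forall>x\<in>generated fa D F. g x = f x) \<and> (\<forall>x\<in>s_carrier D. r (g x) = h x)))"

lemma lifting_propertyE:
  assumes "lifting_property fa ra U B r D" "finite F" "F \<subseteq> s_carrier D" "hom fa ra D B h"
    "emb fa ra (induced ra D (generated fa D F)) U f" "\<forall>x\<in>generated fa D F. r (f x) = h x"
  obtains g where "emb fa ra D U g" "\<forall>x\<in>generated fa D F. g x = f x" "\<forall>x\<in>s_carrier D. r (g x) = h x"
proof -
  have "finite F \<and> F \<subseteq> s_carrier D \<and> hom fa ra D B h \<and>
      emb fa ra (induced ra D (generated fa D F)) U f \<and> (\<forall>x\<in>generated fa D F. r (f x) = h x)"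
    using assms(2-6) by blast
  with assms(1) have "\<exists>g. emb fa ra D U g \<and> (\<forall>x\<in>generated fa D F. g x = f x) \<and>
      (\<forall>x\<in>s_carrier D. r (g x) = h x)"
    unfolding lifting_property_def by (elim allE[of _ F] allE[of _ h] allE[of _ f] mp)
  then show ?thesis using that by blast
qed

lemma lifting_property_iso:
  assumes lift: "lifting_property fa ra U B r D0" and \<phi>: "iso fa ra D D0 \<phi>"
    and D: "is_struc fa ra D" and D0: "is_struc fa ra D0"
  shows "lifting_property fa ra U B r D"
  unfolding lifting_property_def
proof (intro allI impI; elim conjE)
  fix F h f
  assume F: "finite F" "F \<subseteq> s_carrier D" and h: "hom fa ra D B h"
    and f: "emb fa ra (induced ra D (generated fa D F)) U f"
    and eq: "\<forall>x\<in>generated fa D F. r (f x) = h x"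
  define P where "P = generated fa D F"
  obtain \<psi> where \<psi>: "iso fa ra D0 D \<psi>" "\<forall>x\<in>s_carrier D. \<psi> (\<phi> x) = x"
    by (rule iso_inverse[OF \<phi> D D0])
  have \<phi>D: "\<phi> ` s_carrier D = s_carrier D0" using \<phi> by (simp add: iso_def)
  have PD: "P \<subseteq> s_carrier D" unfolding P_def using generated_subset[OF D] .
  have F0: "finite (\<phi> ` F)" "\<phi> ` F \<subseteq> s_carrier D0" using F \<phi>D by auto
  have P0: "generated fa D0 (\<phi> ` F) = \<phi> ` P"
    unfolding P_def using hom_image_generated[OF emb_hom[OF iso_emb[OF \<phi>]] D D0 F(2)] by simp
  have "subuniverse fa D0 (\<phi> ` P)" using generated_subuniverse[OF D0] P0 by metis
  then have struc0: "is_struc fa ra (induced ra D0 (\<phi> ` P))" by (rule induced_is_struc)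
  have "\<phi> ` P \<subseteq> s_carrier D0" using PD \<phi>D by auto
  then have "emb fa ra (induced ra D0 (\<phi> ` P)) D \<psi>" by (rule emb_induced[OF _ iso_emb[OF \<psi>(1)]])
  moreover have "\<psi> ` \<phi> ` P \<subseteq> P" using \<psi>(2) PD by auto
  ultimately have "emb fa ra (induced ra D0 (\<phi> ` P)) (induced ra D P) \<psi>"
    unfolding emb_into_induced[OF struc0 PD] induced_simps by (rule conjI)
  then have f0: "emb fa ra (induced ra D0 (generated fa D0 (\<phi> ` F))) U (f \<circ> \<psi>)"
    using emb_comp[OF _ f] P0 unfolding P_def by simp
  have h0: "hom fa ra D0 B (h \<circ> \<psi>)" using hom_comp[OF emb_hom[OF iso_emb[OF \<psi>(1)]] h] .
  have "\<forall>y\<in>generated fa D0 (\<phi> ` F). r ((f \<circ> \<psi>) y) = (h \<circ> \<psi>) y"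
    using eq \<psi>(2) PD P0 unfolding P_def by auto
  then obtain g0 where g0: "emb fa ra D0 U g0" "\<forall>y\<in>generated fa D0 (\<phi> ` F). g0 y = (f \<circ> \<psi>) y"
    "\<forall>y\<in>s_carrier D0. r (g0 y) = (h \<circ> \<psi>) y"
    using lifting_propertyE[OF lift F0 h0 f0] by blast
  show "\<exists>g. emb fa ra D U g \<and> (\<forall>x\<in>generated fa D F. g x = f x) \<and> (\<forall>x\<in>s_carrier D. r (g x) = h x)"
  proof (intro exI conjI ballI)
    show "emb fa ra D U (g0 \<circ> \<phi>)" using emb_comp[OF iso_emb[OF \<phi>] g0(1)] .
    show "(g0 \<circ> \<phi>) x = f x" if "x \<in> generated fa D F" for x
      using g0(2) P0 \<psi>(2) PD that unfolding P_def by auto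
    show "r ((g0 \<circ> \<phi>) x) = h x" if "x \<in> s_carrier D" for x
      using g0(3) \<phi>D \<psi>(2) that by (metis comp_apply image_eqI)
  qed
qed

section \<open>The age of the Fraisse limit\<close>

definition iso_member :: "('f \<Rightarrow> nat) \<Rightarrow> ('r \<Rightarrow> nat) \<Rightarrow> ('f, 'r) cstruc set \<Rightarrow> ('f, 'r) cstruc \<Rightarrow> bool" where
  "iso_member fa ra C X \<longleftrightarrow> is_struc fa ra X \<and> (\<exists>Y\<in>C. isomorphic fa ra X Y)"

locale fraisse_setting =
  fixes fa :: "'f \<Rightarrow> nat" and ra :: "'r \<Rightarrow> nat"
    and C :: "('f, 'r) cstruc set" and U :: "('f, 'r) cstruc"
  assumes fraisse: "fraisse_class fa ra C" and limit: "fraisse_limit fa ra C U"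
begin

abbreviation "in_C \<equiv> iso_member fa ra C"

lemma U_struc: "is_struc fa ra U"
  using limit by (simp add: fraisse_limit_def)

lemma C_struc: "Y \<in> C \<Longrightarrow> is_struc fa ra Y"
  using fraisse by (simp add: fraisse_class_def is_age_def)

lemma C_fin_gen: "Y \<in> C \<Longrightarrow> fin_gen fa ra Y"
  using fraisse by (simp add: fraisse_class_def is_age_def)

lemma C_in_C: "Y \<in> C \<Longrightarrow> in_C Y"
  unfolding iso_member_def isomorphic_def using C_struc iso_id by blast

lemma C_closure_class: "Y \<in> C \<Longrightarrow> Y \<in> closure_class fa ra C"
  using fraisse C_struc unfolding closure_class_def fraisse_class_def is_age_def by blast

lemma in_C_struc: "in_C X \<Longrightarrow> is_struc fa ra X"
  by (simp add: iso_member_def)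

lemma in_C_inverse:
  assumes "in_C X"
  obtains Y \<phi> \<psi> where "Y \<in> C" "iso fa ra X Y \<phi>" "iso fa ra Y X \<psi>"
    "\<forall>x\<in>s_carrier X. \<psi> (\<phi> x) = x"
proof -
  obtain Y \<phi> where Y: "Y \<in> C" "iso fa ra X Y \<phi>"
    using assms unfolding iso_member_def isomorphic_def by blast
  obtain \<psi> where "iso fa ra Y X \<psi>" "\<forall>x\<in>s_carrier X. \<psi> (\<phi> x) = x"
    by (rule iso_inverse[OF Y(2) in_C_struc[OF assms] C_struc[OF Y(1)]])
  then show ?thesis using that Y by blast
qed

lemma in_C_copy:
  assumes "in_C X"
  obtains Y \<phi> where "Y \<in> C" "iso fa ra X Y \<phi>"
  using in_C_inverse[OF assms] by blast

lemma in_C_fin_gen: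
  assumes "in_C X"
  shows "fin_gen fa ra X"
proof -
  obtain Y \<phi> \<psi> where Y: "Y \<in> C" "iso fa ra X Y \<phi>" "iso fa ra Y X \<psi>"
    "\<forall>x\<in>s_carrier X. \<psi> (\<phi> x) = x"
    by (rule in_C_inverse[OF assms])
  show ?thesis using fin_gen_iso[OF Y(3) C_struc[OF Y(1)] in_C_struc[OF assms] C_fin_gen[OF Y(1)]] .
qed

lemma in_C_iso: "in_C X \<Longrightarrow> iso fa ra X' X h \<Longrightarrow> is_struc fa ra X' \<Longrightarrow> in_C X'"
  unfolding iso_member_def isomorphic_def using iso_comp by blast

lemma substruc_in_C: "substruc fa ra A U \<Longrightarrow> fin_gen fa ra A \<Longrightarrow> in_C A"
  using limit unfolding fraisse_limit_def iso_member_def substruc_def by blast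

lemma fg_subuniverse_in_C: "fg_subuniverse fa U V \<Longrightarrow> in_C (induced ra U V)"
  using substruc_in_C fg_subuniverse_substruc[OF U_struc] fg_subuniverse_fin_gen[OF U_struc]
  by blast

lemma closure_class_in_C:
  "A \<in> closure_class fa ra C \<Longrightarrow> substruc fa ra X A \<Longrightarrow> fin_gen fa ra X \<Longrightarrow> in_C X"
  unfolding closure_class_def iso_member_def substruc_def by blast

lemma substruc_closure_class: "substruc fa ra B U \<Longrightarrow> B \<in> closure_class fa ra C"
  using substruc_trans substruc_in_C unfolding closure_class_def substruc_def iso_member_def by blast

lemma in_C_of_emb:
  assumes X: "is_struc fa ra X" "fin_gen fa ra X" and f: "emb fa ra X U f"
  shows "in_C X"
  using in_C_iso[OF fg_subuniverse_in_C[OF fg_subuniverse_hom_image[OF U_struc X emb_hom[OF f]]]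
      iso_image_induced[OF f X(1)] X(1)] .

lemma in_C_emb_into_U:
  assumes "in_C X"
  obtains \<theta> where "emb fa ra X U \<theta>"
proof -
  obtain Y \<phi> where Y: "Y \<in> C" "iso fa ra X Y \<phi>"
    using assms unfolding iso_member_def isomorphic_def by blast
  obtain A g where A: "substruc fa ra A U" "iso fa ra Y A g"
    using limit Y(1) unfolding fraisse_limit_def isomorphic_def by blast
  have "emb fa ra X U (id \<circ> (g \<circ> \<phi>))"
    using emb_comp iso_emb Y(2) A by (metis substruc_def)
  then show ?thesis using that by blast
qed

lemma in_C_image_emb:
  assumes X: "in_C X" and \<psi>: "emb fa ra X U \<psi>"
  shows "fg_subuniverse fa U (\<psi> ` s_carrier X)"
    and "iso fa ra X (induced ra U (\<psi> ` s_carrier X)) \<psi>"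
  using fg_subuniverse_hom_image[OF U_struc in_C_struc[OF X] in_C_fin_gen[OF X] emb_hom[OF \<psi>]]
    iso_image_induced[OF \<psi> in_C_struc[OF X]] by auto

lemma fg_subuniverse_image_union:
  assumes X: "in_C X" and g: "hom fa ra X U g" and Y: "in_C Y" and k: "hom fa ra Y U k"
  defines "V \<equiv> generated fa U (g ` s_carrier X \<union> k ` s_carrier Y)"
  shows "fg_subuniverse fa U V" "g ` s_carrier X \<subseteq> V" "k ` s_carrier Y \<subseteq> V"
  using fg_subuniverse_union[OF U_struc
      fg_subuniverse_hom_image[OF U_struc in_C_struc[OF X] in_C_fin_gen[OF X] g]
      fg_subuniverse_hom_image[OF U_struc in_C_struc[OF Y] in_C_fin_gen[OF Y] k]]
  unfolding V_def by auto

lemma extend_emb: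
  assumes X: "in_C X" and Y: "in_C Y" and \<phi>: "emb fa ra X Y \<phi>" and \<psi>: "emb fa ra X U \<psi>"
  obtains \<chi> where "emb fa ra Y U \<chi>" "\<forall>x\<in>s_carrier X. \<chi> (\<phi> x) = \<psi> x"
proof -
  obtain \<theta> where \<theta>: "emb fa ra Y U \<theta>" using in_C_emb_into_U[OF Y] .
  have \<theta>\<phi>: "emb fa ra X U (\<theta> \<circ> \<phi>)" using emb_comp[OF \<phi> \<theta>] .
  define A1 where "A1 = induced ra U ((\<theta> \<circ> \<phi>) ` s_carrier X)"
  define A2 where "A2 = induced ra U (\<psi> ` s_carrier X)"
  have A1: "fg_subuniverse fa U (s_carrier A1)" "iso fa ra X A1 (\<theta> \<circ> \<phi>)"
    unfolding A1_def using in_C_image_emb[OF X \<theta>\<phi>] by auto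
  have A2: "fg_subuniverse fa U (s_carrier A2)" "iso fa ra X A2 \<psi>"
    unfolding A2_def using in_C_image_emb[OF X \<psi>] by auto
  have A1_struc: "is_struc fa ra A1" and A2_struc: "is_struc fa ra A2"
    using fg_subuniverse_induced_is_struc[OF U_struc] A1(1) A2(1) unfolding A1_def A2_def by auto
  obtain q where q: "iso fa ra A1 X q" "\<forall>x\<in>s_carrier X. q ((\<theta> \<circ> \<phi>) x) = x"
    by (rule iso_inverse[OF A1(2) in_C_struc[OF X] A1_struc])
  have "substruc fa ra A1 U" "substruc fa ra A2 U" "fin_gen fa ra A1"
    using fg_subuniverse_substruc[OF U_struc] fg_subuniverse_fin_gen[OF U_struc] A1(1) A2(1)
    unfolding A1_def A2_def by auto
  then obtain \<alpha> where \<alpha>: "automorphism fa ra U \<alpha>" "\<forall>x\<in>s_carrier A1. \<alpha> x = (\<psi> \<circ> q) x"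
    using limit iso_comp[OF q(1) A2(2)] unfolding fraisse_limit_def homogeneous_def by blast
  show ?thesis
  proof
    show "emb fa ra Y U (\<alpha> \<circ> \<theta>)" using emb_comp[OF \<theta> automorphism_emb[OF \<alpha>(1)]] .
    show "\<forall>x\<in>s_carrier X. (\<alpha> \<circ> \<theta>) (\<phi> x) = \<psi> x"
      using \<alpha>(2) q(2) unfolding A1_def by simp
  qed
qed

lemma HAP_in_C:
  assumes HAP: "HAP fa ra C" and A: "in_C A" and B1: "in_C B1" and B2: "in_C B2"
    and f1: "emb fa ra A B1 f1" and f2: "hom fa ra A B2 f2"
  obtains D g1 g2 where "in_C D" "emb fa ra B2 D g2" "hom fa ra B1 D g1"
    "\<forall>x\<in>s_carrier A. g1 (f1 x) = g2 (f2 x)"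
proof -
  obtain A' p q where A': "A' \<in> C" "iso fa ra A A' p" "iso fa ra A' A q"
    "\<forall>x\<in>s_carrier A. q (p x) = x"
    by (rule in_C_inverse[OF A])
  obtain B1' p1 where B1': "B1' \<in> C" "iso fa ra B1 B1' p1"
    by (rule in_C_copy[OF B1])
  obtain B2' p2 where B2': "B2' \<in> C" "iso fa ra B2 B2' p2"
    by (rule in_C_copy[OF B2])
  have "emb fa ra A' B1' (p1 \<circ> f1 \<circ> q)"
    using emb_comp[OF emb_comp[OF iso_emb[OF A'(3)] f1] iso_emb[OF B1'(2)]]
    by (simp_all add: comp_assoc)
  moreover have "hom fa ra A' B2' (p2 \<circ> f2 \<circ> q)"
    using hom_comp[OF hom_comp[OF emb_hom[OF iso_emb[OF A'(3)]] f2] emb_hom[OF iso_emb[OF B2'(2)]]]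
    by (simp_all add: comp_assoc)
  ultimately obtain D g1 g2 where D: "D \<in> C" "emb fa ra B2' D g2" "hom fa ra B1' D g1"
    "\<forall>x\<in>s_carrier A'. g1 ((p1 \<circ> f1 \<circ> q) x) = g2 ((p2 \<circ> f2 \<circ> q) x)"
    using HAP[unfolded HAP_def, rule_format, OF A'(1) B1'(1) B2'(1)] by blast
  show ?thesis
  proof
    show "in_C D" using C_in_C[OF D(1)] .
    show "emb fa ra B2 D (g2 \<circ> p2)" using emb_comp[OF iso_emb[OF B2'(2)] D(2)] .
    show "hom fa ra B1 D (g1 \<circ> p1)" using hom_comp[OF emb_hom[OF iso_emb[OF B1'(2)]] D(3)] .
    show "\<forall>x\<in>s_carrier A. (g1 \<circ> p1) (f1 x) = (g2 \<circ> p2) (f2 x)"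
      using D(4) A'(4) homD(1)[OF emb_hom[OF iso_emb[OF A'(2)]]] by (metis comp_apply)
  qed
qed

lemma amalgamated_extension_in_C:
  assumes AEP: "amalgamated_extension fa ra C"
    and A: "in_C A" and B1: "in_C B1" and B2: "in_C B2" and T: "in_C T"
    and f1: "emb fa ra A B1 f1" and f2: "emb fa ra A B2 f2"
    and h1: "hom fa ra B1 T h1" and h2: "hom fa ra B2 T h2"
    and eq: "\<forall>x\<in>s_carrier A. h1 (f1 x) = h2 (f2 x)"
  obtains D T' g1 g2 k h where "in_C D" "in_C T'" "emb fa ra B1 D g1" "emb fa ra B2 D g2"
    "\<forall>x\<in>s_carrier A. g1 (f1 x) = g2 (f2 x)" "emb fa ra T T' k" "hom fa ra D T' h"
    "\<forall>x\<in>s_carrier B1. h (g1 x) = k (h1 x)" "\<forall>x\<in>s_carrier B2. h (g2 x) = k (h2 x)"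
proof -
  obtain A' p q where A': "A' \<in> C" "iso fa ra A A' p" "iso fa ra A' A q"
    "\<forall>x\<in>s_carrier A. q (p x) = x"
    by (rule in_C_inverse[OF A])
  obtain B1' p1 q1 where B1': "B1' \<in> C" "iso fa ra B1 B1' p1" "iso fa ra B1' B1 q1"
    "\<forall>x\<in>s_carrier B1. q1 (p1 x) = x"
    by (rule in_C_inverse[OF B1])
  obtain B2' p2 q2 where B2': "B2' \<in> C" "iso fa ra B2 B2' p2" "iso fa ra B2' B2 q2"
    "\<forall>x\<in>s_carrier B2. q2 (p2 x) = x"
    by (rule in_C_inverse[OF B2])
  obtain T0 pT where T0: "T0 \<in> C" "iso fa ra T T0 pT"
    by (rule in_C_copy[OF T])
  have qA: "q y \<in> s_carrier A" if "y \<in> s_carrier A'" for y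
    using homD(1)[OF emb_hom[OF iso_emb[OF A'(3)]] that] .
  have pA: "p x \<in> s_carrier A'" if "x \<in> s_carrier A" for x
    using homD(1)[OF emb_hom[OF iso_emb[OF A'(2)]] that] .
  have f1A: "f1 x \<in> s_carrier B1" and f2A: "f2 x \<in> s_carrier B2" if "x \<in> s_carrier A" for x
    using homD(1)[OF emb_hom[OF f1] that] homD(1)[OF emb_hom[OF f2] that] by auto
  have "emb fa ra A' B1' (p1 \<circ> f1 \<circ> q)" "emb fa ra A' B2' (p2 \<circ> f2 \<circ> q)"
    using emb_comp[OF emb_comp[OF iso_emb[OF A'(3)] f1] iso_emb[OF B1'(2)]]
      emb_comp[OF emb_comp[OF iso_emb[OF A'(3)] f2] iso_emb[OF B2'(2)]]
    by (simp_all add: comp_assoc)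
  moreover have "hom fa ra B1' T0 (pT \<circ> h1 \<circ> q1)" "hom fa ra B2' T0 (pT \<circ> h2 \<circ> q2)"
    using hom_comp[OF hom_comp[OF emb_hom[OF iso_emb[OF B1'(3)]] h1] emb_hom[OF iso_emb[OF T0(2)]]]
      hom_comp[OF hom_comp[OF emb_hom[OF iso_emb[OF B2'(3)]] h2] emb_hom[OF iso_emb[OF T0(2)]]]
    by (simp_all add: comp_assoc)
  moreover have "\<forall>y\<in>s_carrier A'. (pT \<circ> h1 \<circ> q1) ((p1 \<circ> f1 \<circ> q) y) = (pT \<circ> h2 \<circ> q2) ((p2 \<circ> f2 \<circ> q) y)"
    using B1'(4) B2'(4) f1A f2A qA eq by simp
  ultimately obtain D T' g1 g2 k h where R: "D \<in> C" "T' \<in> C" "emb fa ra B1' D g1" "emb fa ra B2' D g2"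
    "\<forall>x\<in>s_carrier A'. g1 ((p1 \<circ> f1 \<circ> q) x) = g2 ((p2 \<circ> f2 \<circ> q) x)"
    "emb fa ra T0 T' k" "hom fa ra D T' h"
    "\<forall>x\<in>s_carrier B1'. h (g1 x) = k ((pT \<circ> h1 \<circ> q1) x)"
    "\<forall>x\<in>s_carrier B2'. h (g2 x) = k ((pT \<circ> h2 \<circ> q2) x)"
    using AEP[unfolded amalgamated_extension_def, rule_format, OF A'(1) B1'(1) B2'(1) T0(1)]
    by blast
  show ?thesis
  proof
    show "in_C D" "in_C T'" using C_in_C R(1,2) by auto
    show "emb fa ra B1 D (g1 \<circ> p1)" "emb fa ra B2 D (g2 \<circ> p2)" "emb fa ra T T' (k \<circ> pT)"
      using emb_comp[OF iso_emb[OF B1'(2)] R(3)] emb_comp[OF iso_emb[OF B2'(2)] R(4)]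
        emb_comp[OF iso_emb[OF T0(2)] R(6)] .
    show "hom fa ra D T' h" by (rule R(7))
    show "\<forall>x\<in>s_carrier A. (g1 \<circ> p1) (f1 x) = (g2 \<circ> p2) (f2 x)"
      using R(5) A'(4) pA by (metis comp_apply)
    show "\<forall>x\<in>s_carrier B1. h ((g1 \<circ> p1) x) = (k \<circ> pT) (h1 x)"
      using R(8) B1'(4) homD(1)[OF emb_hom[OF iso_emb[OF B1'(2)]]] by (metis comp_apply)
    show "\<forall>x\<in>s_carrier B2. h ((g2 \<circ> p2) x) = (k \<circ> pT) (h2 x)"
      using R(9) B2'(4) homD(1)[OF emb_hom[OF iso_emb[OF B2'(2)]]] by (metis comp_apply)
  qed
qed

end

section \<open>HAP and the amalgamated extension property from a universal homogeneous retraction\<close>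

context fraisse_setting
begin

lemma uh_retraction_hom: "uh_retraction fa ra C U B r \<Longrightarrow> hom fa ra U B r"
  by (simp add: uh_retraction_def retraction_def)

lemma uh_retraction_lift:
  assumes "uh_retraction fa ra C U B r" "A \<in> closure_class fa ra C" "hom fa ra A B h"
  obtains \<iota> where "emb fa ra A U \<iota>" "\<forall>x\<in>s_carrier A. h x = r (\<iota> x)"
  using assms unfolding uh_retraction_def by blast

lemma uh_retraction_conjugate:
  assumes uh: "uh_retraction fa ra C U B r" and A: "is_struc fa ra A" "fin_gen fa ra A"
    and k1: "emb fa ra A U k1" and k2: "emb fa ra A U k2"
    and eq: "\<forall>x\<in>s_carrier A. r (k1 x) = r (k2 x)"
  obtains \<alpha> where "automorphism fa ra U \<alpha>" "\<forall>x\<in>s_carrier U. r (\<alpha> x) = r x"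
    "\<forall>x\<in>s_carrier A. \<alpha> (k1 x) = k2 x"
proof -
  define A1 where "A1 = induced ra U (k1 ` s_carrier A)"
  have sub: "subuniverse fa U (k1 ` s_carrier A)"
    using hom_image_subuniverse[OF emb_hom[OF k1] A(1)] .
  have A1: "iso fa ra A A1 k1" "is_struc fa ra A1" "substruc fa ra A1 U"
    using iso_image_induced[OF k1 A(1)] induced_is_struc[OF sub] induced_substruc[OF sub]
    unfolding A1_def by auto
  obtain q where q: "iso fa ra A1 A q" "\<forall>x\<in>s_carrier A. q (k1 x) = x"
    by (rule iso_inverse[OF A1(1) A(1) A1(2)])
  have "emb fa ra A1 U (k2 \<circ> q)" using emb_comp[OF iso_emb[OF q(1)] k2] .
  moreover have "\<forall>y\<in>s_carrier A1. r ((k2 \<circ> q) y) = r y"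
    using q(2) eq unfolding A1_def by auto
  moreover have "fin_gen fa ra A1" using fin_gen_iso[OF A1(1) A(1) A1(2) A(2)] .
  ultimately obtain \<alpha> where "automorphism fa ra U \<alpha>" "\<forall>x\<in>s_carrier U. r (\<alpha> x) = r x"
    "\<forall>y\<in>s_carrier A1. \<alpha> y = (k2 \<circ> q) y"
    using uh A1(3) unfolding uh_retraction_def by blast
  then show ?thesis using that q(2) unfolding A1_def by simp
qed

lemma uh_retraction_joint_lift:
  assumes uh: "uh_retraction fa ra C U B r" and A: "is_struc fa ra A" "fin_gen fa ra A"
    and B1: "B1 \<in> closure_class fa ra C" and B2: "B2 \<in> closure_class fa ra C"
    and f1: "emb fa ra A B1 f1" and f2: "emb fa ra A B2 f2"
    and k1: "hom fa ra B1 B k1" and k2: "hom fa ra B2 B k2"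
    and eq: "\<forall>x\<in>s_carrier A. k1 (f1 x) = k2 (f2 x)"
  obtains g1 g2 where "emb fa ra B1 U g1" "emb fa ra B2 U g2" "\<forall>x\<in>s_carrier B1. r (g1 x) = k1 x"
    "\<forall>x\<in>s_carrier B2. r (g2 x) = k2 x" "\<forall>x\<in>s_carrier A. g1 (f1 x) = g2 (f2 x)"
proof -
  obtain \<iota>1 where \<iota>1: "emb fa ra B1 U \<iota>1" "\<forall>x\<in>s_carrier B1. k1 x = r (\<iota>1 x)"
    using uh_retraction_lift[OF uh B1 k1] .
  obtain \<iota>2 where \<iota>2: "emb fa ra B2 U \<iota>2" "\<forall>x\<in>s_carrier B2. k2 x = r (\<iota>2 x)"
    using uh_retraction_lift[OF uh B2 k2] .
  have "\<forall>x\<in>s_carrier A. r ((\<iota>1 \<circ> f1) x) = r ((\<iota>2 \<circ> f2) x)"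
    using \<iota>1(2) \<iota>2(2) eq homD(1)[OF emb_hom[OF f1]] homD(1)[OF emb_hom[OF f2]] by (metis comp_apply)
  then obtain \<alpha> where \<alpha>: "automorphism fa ra U \<alpha>" "\<forall>x\<in>s_carrier U. r (\<alpha> x) = r x"
    "\<forall>x\<in>s_carrier A. \<alpha> ((\<iota>1 \<circ> f1) x) = (\<iota>2 \<circ> f2) x"
    using uh_retraction_conjugate[OF uh A emb_comp[OF f1 \<iota>1(1)] emb_comp[OF f2 \<iota>2(1)]] by blast
  show ?thesis
  proof
    show "emb fa ra B1 U (\<alpha> \<circ> \<iota>1)" using emb_comp[OF \<iota>1(1) automorphism_emb[OF \<alpha>(1)]] .
    show "\<forall>x\<in>s_carrier B1. r ((\<alpha> \<circ> \<iota>1) x) = k1 x"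
      using \<alpha>(2) \<iota>1(2) homD(1)[OF emb_hom[OF \<iota>1(1)]] by simp
    show "\<forall>x\<in>s_carrier A. (\<alpha> \<circ> \<iota>1) (f1 x) = \<iota>2 (f2 x)" using \<alpha>(3) by simp
  qed (use \<iota>2 in auto)
qed

lemma HAP_if_uh_retraction:
  assumes uh: "uh_retraction fa ra C U U r"
  shows "HAP fa ra C"
  unfolding HAP_def
proof (intro ballI allI impI; elim conjE)
  fix A B1 B2 f1 f2
  assume A: "A \<in> C" and B1: "B1 \<in> C" and B2: "B2 \<in> C"
    and f1: "emb fa ra A B1 f1" and f2: "hom fa ra A B2 f2"
  obtain \<theta> where \<theta>: "emb fa ra B2 U \<theta>" using in_C_emb_into_U[OF C_in_C[OF B2]] .
  obtain \<iota> where \<iota>: "emb fa ra A U \<iota>" "\<forall>x\<in>s_carrier A. (\<theta> \<circ> f2) x = r (\<iota> x)"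
    using uh_retraction_lift[OF uh C_closure_class[OF A] hom_comp[OF f2 emb_hom[OF \<theta>]]] .
  obtain \<chi> where \<chi>: "emb fa ra B1 U \<chi>" "\<forall>x\<in>s_carrier A. \<chi> (f1 x) = \<iota> x"
    using extend_emb[OF C_in_C[OF A] C_in_C[OF B1] f1 \<iota>(1)] .
  have r\<chi>: "hom fa ra B1 U (r \<circ> \<chi>)" using hom_comp[OF emb_hom[OF \<chi>(1)] uh_retraction_hom[OF uh]] .
  define V where "V = generated fa U (\<theta> ` s_carrier B2 \<union> (r \<circ> \<chi>) ` s_carrier B1)"
  have V: "fg_subuniverse fa U V" "\<theta> ` s_carrier B2 \<subseteq> V" "(r \<circ> \<chi>) ` s_carrier B1 \<subseteq> V"
    unfolding V_def by (rule fg_subuniverse_image_union[OF C_in_C[OF B2] emb_hom[OF \<theta>] C_in_C[OF B1] r\<chi>])+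
  obtain D \<psi> where D: "D \<in> C" "iso fa ra (induced ra U V) D \<psi>"
    by (rule in_C_copy[OF fg_subuniverse_in_C[OF V(1)]])
  have VU: "V \<subseteq> s_carrier U" using fg_subuniverse_subset[OF U_struc V(1)] .
  have "emb fa ra B2 D (\<psi> \<circ> \<theta>)"
    using emb_comp[OF _ iso_emb[OF D(2)]] emb_into_induced[OF C_struc[OF B2] VU] \<theta> V(2) by blast
  moreover have "hom fa ra B1 D (\<psi> \<circ> (r \<circ> \<chi>))"
    using hom_comp[OF _ emb_hom[OF iso_emb[OF D(2)]]] hom_into_induced[OF C_struc[OF B1] VU]
      r\<chi> V(3) by blast
  moreover have "\<forall>x\<in>s_carrier A. (\<psi> \<circ> (r \<circ> \<chi>)) (f1 x) = (\<psi> \<circ> \<theta>) (f2 x)"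
    using \<chi>(2) \<iota>(2) by simp
  ultimately show "\<exists>D\<in>C. \<exists>g1 g2. emb fa ra B2 D g2 \<and> hom fa ra B1 D g1 \<and>
      (\<forall>x\<in>s_carrier A. g1 (f1 x) = g2 (f2 x))"
    using D(1) by blast
qed

lemma amalgamated_extension_witness:
  assumes D0: "in_C D0" and T0: "in_C T0"
    and g1: "emb fa ra B1 D0 g1" and g2: "emb fa ra B2 D0 g2"
    and g12: "\<forall>x\<in>s_carrier A. g1 (f1 x) = g2 (f2 x)"
    and k: "emb fa ra T T0 k" and h: "hom fa ra D0 T0 h"
    and h1: "\<forall>x\<in>s_carrier B1. h (g1 x) = k (h1 x)" and h2: "\<forall>x\<in>s_carrier B2. h (g2 x) = k (h2 x)"
  shows "\<exists>D\<in>C. \<exists>T'\<in>C. \<exists>g1 g2 k h.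
           emb fa ra B1 D g1 \<and> emb fa ra B2 D g2 \<and> (\<forall>x\<in>s_carrier A. g1 (f1 x) = g2 (f2 x)) \<and>
           emb fa ra T T' k \<and> hom fa ra D T' h \<and>
           (\<forall>x\<in>s_carrier B1. h (g1 x) = k (h1 x)) \<and> (\<forall>x\<in>s_carrier B2. h (g2 x) = k (h2 x))"
proof -
  obtain D \<psi> \<psi>' where D: "D \<in> C" "iso fa ra D0 D \<psi>" "iso fa ra D D0 \<psi>'"
    "\<forall>x\<in>s_carrier D0. \<psi>' (\<psi> x) = x"
    by (rule in_C_inverse[OF D0])
  obtain T' \<psi>T where T': "T' \<in> C" "iso fa ra T0 T' \<psi>T"
    by (rule in_C_copy[OF T0])
  have "emb fa ra B1 D (\<psi> \<circ> g1)" "emb fa ra B2 D (\<psi> \<circ> g2)" "emb fa ra T T' (\<psi>T \<circ> k)"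
    using emb_comp[OF g1 iso_emb[OF D(2)]] emb_comp[OF g2 iso_emb[OF D(2)]]
      emb_comp[OF k iso_emb[OF T'(2)]] .
  moreover have "hom fa ra D T' (\<psi>T \<circ> h \<circ> \<psi>')"
    using hom_comp[OF hom_comp[OF emb_hom[OF iso_emb[OF D(3)]] h] emb_hom[OF iso_emb[OF T'(2)]]]
    by (simp_all add: comp_assoc)
  moreover have "\<forall>x\<in>s_carrier B1. (\<psi>T \<circ> h \<circ> \<psi>') ((\<psi> \<circ> g1) x) = (\<psi>T \<circ> k) (h1 x)"
    using h1 D(4) homD(1)[OF emb_hom[OF g1]] by simp
  moreover have "\<forall>x\<in>s_carrier B2. (\<psi>T \<circ> h \<circ> \<psi>') ((\<psi> \<circ> g2) x) = (\<psi>T \<circ> k) (h2 x)"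
    using h2 D(4) homD(1)[OF emb_hom[OF g2]] by simp
  moreover have "\<forall>x\<in>s_carrier A. (\<psi> \<circ> g1) (f1 x) = (\<psi> \<circ> g2) (f2 x)" using g12 by simp
  ultimately show ?thesis using D(1) T'(1) by blast
qed

lemma amalgamated_extension_if_uh_retraction:
  assumes uh: "uh_retraction fa ra C U U r"
  shows "amalgamated_extension fa ra C"
  unfolding amalgamated_extension_def
proof (intro ballI allI impI; elim conjE)
  fix A B1 B2 T f1 f2 h1 h2
  assume A: "A \<in> C" and B1: "B1 \<in> C" and B2: "B2 \<in> C" and T: "T \<in> C"
    and f1: "emb fa ra A B1 f1" and f2: "emb fa ra A B2 f2"
    and h1: "hom fa ra B1 T h1" and h2: "hom fa ra B2 T h2"
    and eq: "\<forall>x\<in>s_carrier A. h1 (f1 x) = h2 (f2 x)"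
  have r: "hom fa ra U U r" using uh_retraction_hom[OF uh] .
  obtain \<theta> where \<theta>: "emb fa ra T U \<theta>" using in_C_emb_into_U[OF C_in_C[OF T]] .
  have "\<forall>x\<in>s_carrier A. (\<theta> \<circ> h1) (f1 x) = (\<theta> \<circ> h2) (f2 x)" using eq by simp
  then obtain g1 g2 where g: "emb fa ra B1 U g1" "emb fa ra B2 U g2"
    "\<forall>x\<in>s_carrier B1. r (g1 x) = (\<theta> \<circ> h1) x" "\<forall>x\<in>s_carrier B2. r (g2 x) = (\<theta> \<circ> h2) x"
    "\<forall>x\<in>s_carrier A. g1 (f1 x) = g2 (f2 x)"
    using uh_retraction_joint_lift[OF uh C_struc[OF A] C_fin_gen[OF A] C_closure_class[OF B1]
        C_closure_class[OF B2] f1 f2 hom_comp[OF h1 emb_hom[OF \<theta>]] hom_comp[OF h2 emb_hom[OF \<theta>]]]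
    by blast
  define V where "V = generated fa U (g1 ` s_carrier B1 \<union> g2 ` s_carrier B2)"
  have V: "fg_subuniverse fa U V" "g1 ` s_carrier B1 \<subseteq> V" "g2 ` s_carrier B2 \<subseteq> V"
    unfolding V_def
    by (rule fg_subuniverse_image_union[OF C_in_C[OF B1] emb_hom[OF g(1)] C_in_C[OF B2] emb_hom[OF g(2)]])+
  have VU: "V \<subseteq> s_carrier U" using fg_subuniverse_subset[OF U_struc V(1)] .
  have rV: "hom fa ra (induced ra U V) U r" using hom_induced[OF VU r] .
  define W where "W = generated fa U (\<theta> ` s_carrier T \<union> r ` V)"
  have W: "fg_subuniverse fa U W" "\<theta> ` s_carrier T \<subseteq> W" "r ` V \<subseteq> W"
    unfolding W_def
    by (rule fg_subuniverse_image_union[OF C_in_C[OF T] emb_hom[OF \<theta>] fg_subuniverse_in_C[OF V(1)] rV, simplified])+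
  have WU: "W \<subseteq> s_carrier U" using fg_subuniverse_subset[OF U_struc W(1)] .
  show "\<exists>D\<in>C. \<exists>T'\<in>C. \<exists>g1 g2 k h.
           emb fa ra B1 D g1 \<and> emb fa ra B2 D g2 \<and> (\<forall>x\<in>s_carrier A. g1 (f1 x) = g2 (f2 x)) \<and>
           emb fa ra T T' k \<and> hom fa ra D T' h \<and>
           (\<forall>x\<in>s_carrier B1. h (g1 x) = k (h1 x)) \<and> (\<forall>x\<in>s_carrier B2. h (g2 x) = k (h2 x))"
  proof (rule amalgamated_extension_witness)
    show "in_C (induced ra U V)" "in_C (induced ra U W)"
      using fg_subuniverse_in_C V(1) W(1) by auto
    show "emb fa ra B1 (induced ra U V) g1" "emb fa ra B2 (induced ra U V) g2"
      using emb_into_induced[OF C_struc[OF B1] VU] emb_into_induced[OF C_struc[OF B2] VU]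
        g(1,2) V(2,3) by auto
    show "emb fa ra T (induced ra U W) \<theta>"
      using emb_into_induced[OF C_struc[OF T] WU] \<theta> W(2) by auto
    show "hom fa ra (induced ra U V) (induced ra U W) r"
      using hom_into_induced[OF fg_subuniverse_induced_is_struc[OF U_struc V(1)] WU] rV W(3) by simp
    show "\<forall>x\<in>s_carrier A. g1 (f1 x) = g2 (f2 x)" by (rule g(5))
    show "\<forall>x\<in>s_carrier B1. r (g1 x) = \<theta> (h1 x)" using g(3) by simp
    show "\<forall>x\<in>s_carrier B2. r (g2 x) = \<theta> (h2 x)" using g(4) by simp
  qed
qed

end

section \<open>Universality and homogeneity from the lifting property\<close>

locale lifting_setting = fraisse_setting +
  fixes B and r :: "nat \<Rightarrow> nat"
  assumes r_hom: "hom fa ra U B r"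
    and r_lifting: "\<And>D. in_C D \<Longrightarrow> lifting_property fa ra U B r D"
begin

lemma lift_into_U:
  assumes A: "A \<in> closure_class fa ra C" and h: "hom fa ra A B h"
  obtains \<iota> where "emb fa ra A U \<iota>" "\<forall>x\<in>s_carrier A. h x = r (\<iota> x)"
proof -
  have A_struc: "is_struc fa ra A" using A by (simp add: closure_class_def)
  define G where "G n = {x \<in> s_carrier A. x < n}" for n
  define Q where "Q n = generated fa A (G n)" for n
  have G: "finite (G n)" "G n \<subseteq> s_carrier A" for n unfolding G_def by auto
  interpret chain: subuniverse_chain fa ra A Q
    unfolding Q_def G_def by (rule initial_segments_chain[OF A_struc])
  have Q_in_C: "in_C (induced ra A (Q n))" for n
    using closure_class_in_C[OF A induced_substruc[OF chain.Q_subuniverse]] fin_gen_generated[OF A_struc G]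
    unfolding Q_def by blast
  have Q_struc: "is_struc fa ra (induced ra A (Q n))" for n
    using induced_is_struc[OF chain.Q_subuniverse] .
  have hQ: "hom fa ra (induced ra A (Q n)) B h" for n using hom_induced[OF chain.Q_subset h] .
  have Q_gen: "generated fa (induced ra A (Q m)) (G n) = Q n" if "n \<le> m" for n m
  proof -
    have "G n \<subseteq> Q m" using generated_superset[OF G(2), where fa = fa] chain.Q_mono[OF that]
      unfolding Q_def by blast
    then show ?thesis using generated_induced[OF A_struc chain.Q_subuniverse] unfolding Q_def by simp
  qed
  define lift_on where "lift_on n g \<longleftrightarrow> emb fa ra (induced ra A (Q n)) U g \<and> (\<forall>x\<in>Q n. r (g x) = h x)" for n g
  have "\<exists>g. lift_on 0 g"
  proof -
    obtain \<theta> where \<theta>: "emb fa ra (induced ra A (Q 0)) U \<theta>" using in_C_emb_into_U[OF Q_in_C] .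
    have r\<theta>: "hom fa ra (induced ra A (Q 0)) B (r \<circ> \<theta>)" using hom_comp[OF emb_hom[OF \<theta>] r_hom] .
    have "(r \<circ> \<theta>) x = h x" if "x \<in> Q 0" for x
      using hom_eq_on_generated[OF r\<theta> hQ Q_struc, of "G 0" x] Q_gen[of 0 0] that
      unfolding G_def by simp
    then show ?thesis using \<theta> unfolding lift_on_def by auto
  qed
  moreover have "\<exists>g'. lift_on (Suc n) g' \<and> (\<forall>x\<in>Q n. g' x = g x)" if g: "lift_on n g" for n g
  proof -
    have "emb fa ra (induced ra (induced ra A (Q (Suc n))) (generated fa (induced ra A (Q (Suc n))) (G n))) U g"
      using g induced_induced[OF chain.Q_Suc, of ra A n] Q_gen[of n "Suc n"] unfolding lift_on_def by simp
    moreover have "G n \<subseteq> s_carrier (induced ra A (Q (Suc n)))"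
      using generated_superset[OF G(2), where fa = fa] chain.Q_Suc[of n] unfolding Q_def by auto
    ultimately obtain g' where "emb fa ra (induced ra A (Q (Suc n))) U g'"
      "\<forall>x\<in>Q n. g' x = g x" "\<forall>x\<in>Q (Suc n). r (g' x) = h x"
      using lifting_propertyE[OF r_lifting[OF Q_in_C] G(1) _ hQ] g Q_gen[of n "Suc n"]
      unfolding lift_on_def by (metis induced_simps(1) le_SucI order_refl)
    then show ?thesis unfolding lift_on_def by blast
  qed
  ultimately obtain s where s: "\<And>n. lift_on n (s n)" "\<And>n x. x \<in> Q n \<Longrightarrow> s (Suc n) x = s n x"
    using dependent_nat_choice[of lift_on "\<lambda>n g g'. \<forall>x\<in>Q n. g' x = g x"] by blast
  show ?thesis
  proof
    show "emb fa ra A U (chain_limit s)"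
      using chain.chain_limit_emb[where k = s, OF s(2)] s(1) unfolding lift_on_def by blast
    show "\<forall>x\<in>s_carrier A. h x = r (chain_limit s x)"
      using chain.chain_limit_eq[where k = s, OF s(2)] s(1) chain.Q_cover unfolding lift_on_def by metis
  qed
qed

definition partial_aut :: "nat set \<Rightarrow> nat set \<Rightarrow> (nat \<Rightarrow> nat) \<Rightarrow> bool" where
  "partial_aut P Q p \<longleftrightarrow> fg_subuniverse fa U P \<and> fg_subuniverse fa U Q \<and>
     iso fa ra (induced ra U P) (induced ra U Q) p \<and> (\<forall>x\<in>P. r (p x) = r x)"

lemma partial_aut_extend:
  assumes p: "partial_aut P Q p" and P': "fg_subuniverse fa U P'" "P \<subseteq> P'"
  obtains Q' p' where "partial_aut P' Q' p'" "Q \<subseteq> Q'" "\<forall>x\<in>P. p' x = p x"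
proof -
  have P: "fg_subuniverse fa U P" and Q: "fg_subuniverse fa U Q"
    and iso: "iso fa ra (induced ra U P) (induced ra U Q) p" and rp: "\<forall>x\<in>P. r (p x) = r x"
    using p by (auto simp: partial_aut_def)
  obtain F where F: "finite F" "F \<subseteq> s_carrier U" "P = generated fa U F"
    using P by (auto simp: fg_subuniverse_def)
  have FP: "F \<subseteq> P" using generated_superset[OF F(2)] F(3) by blast
  have P'U: "P' \<subseteq> s_carrier U" using fg_subuniverse_subset[OF U_struc P'(1)] .
  have gen: "generated fa (induced ra U P') F = P"
    using generated_induced[OF U_struc fg_subuniverse_subuniverse[OF U_struc P'(1)]] FP P'(2) F(3)
    by blast
  have "emb fa ra (induced ra U P) U p"
    using emb_into_induced[OF fg_subuniverse_induced_is_struc[OF U_struc P] fg_subuniverse_subset[OF U_struc Q]]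
      iso_emb[OF iso] by blast
  then have "emb fa ra (induced ra (induced ra U P') (generated fa (induced ra U P') F)) U p"
    using induced_induced[OF P'(2), of ra U] gen by simp
  moreover have "F \<subseteq> s_carrier (induced ra U P')" using FP P'(2) by simp
  ultimately obtain g where g: "emb fa ra (induced ra U P') U g" "\<forall>x\<in>P. g x = p x"
    "\<forall>x\<in>P'. r (g x) = r x"
    using lifting_propertyE[OF r_lifting[OF fg_subuniverse_in_C[OF P'(1)]] F(1) _
        hom_induced[OF P'U r_hom]] gen rp
    by (metis induced_simps(1))
  have Q': "fg_subuniverse fa U (g ` P')" "iso fa ra (induced ra U P') (induced ra U (g ` P')) g"
    using in_C_image_emb[OF fg_subuniverse_in_C[OF P'(1)] g(1)] by auto
  show ?thesis
  proof
    show "partial_aut P' (g ` P') g" unfolding partial_aut_def using P'(1) Q' g(3) by blast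
    have "Q = g ` P" using iso g(2) by (simp add: iso_def)
    then show "Q \<subseteq> g ` P'" using P'(2) by blast
    show "\<forall>x\<in>P. g x = p x" by (rule g(2))
  qed
qed

lemma partial_aut_inverse:
  assumes p: "partial_aut P Q p"
  obtains q where "partial_aut Q P q" "\<forall>x\<in>P. q (p x) = x"
proof -
  have P: "fg_subuniverse fa U P" and Q: "fg_subuniverse fa U Q"
    and iso: "iso fa ra (induced ra U P) (induced ra U Q) p" and rp: "\<forall>x\<in>P. r (p x) = r x"
    using p by (auto simp: partial_aut_def)
  obtain q where q: "iso fa ra (induced ra U Q) (induced ra U P) q" "\<forall>x\<in>P. q (p x) = x"
    by (rule iso_inverse[OF iso fg_subuniverse_induced_is_struc[OF U_struc P]
        fg_subuniverse_induced_is_struc[OF U_struc Q], unfolded induced_simps])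
  have "\<forall>y\<in>Q. r (q y) = r y"
  proof
    fix y assume "y \<in> Q"
    then obtain x where "x \<in> P" "y = p x" using iso by (auto simp: iso_def)
    then show "r (q y) = r y" using q(2) rp by simp
  qed
  then show ?thesis using that P Q q unfolding partial_aut_def by blast
qed

lemma partial_aut_back_and_forth:
  assumes p: "partial_aut P Q p"
  obtains P' Q' p' where "partial_aut P' Q' p'" "P \<subseteq> P'" "Q \<subseteq> Q'"
    "n \<in> s_carrier U \<longrightarrow> n \<in> P' \<and> n \<in> Q'" "\<forall>x\<in>P. p' x = p x"
proof -
  define N where "N = generated fa U ({n} \<inter> s_carrier U)"
  have N: "fg_subuniverse fa U N" "n \<in> s_carrier U \<longrightarrow> n \<in> N"
    using fg_subuniverse_point[OF U_struc] unfolding N_def by auto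
  have P: "fg_subuniverse fa U P" and Q: "fg_subuniverse fa U Q" using p by (auto simp: partial_aut_def)
  define P1 where "P1 = generated fa U (P \<union> N)"
  have P1: "fg_subuniverse fa U P1" "P \<subseteq> P1" "N \<subseteq> P1"
    using fg_subuniverse_union[OF U_struc P N(1)] unfolding P1_def by auto
  obtain Q1 p1 where p1: "partial_aut P1 Q1 p1" "Q \<subseteq> Q1" "\<forall>x\<in>P. p1 x = p x"
    using partial_aut_extend[OF p P1(1,2)] .
  obtain q1 where q1: "partial_aut Q1 P1 q1" "\<forall>x\<in>P1. q1 (p1 x) = x"
    using partial_aut_inverse[OF p1(1)] .
  have Q1: "fg_subuniverse fa U Q1" using p1(1) by (simp add: partial_aut_def)
  define Q2 where "Q2 = generated fa U (Q1 \<union> N)"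
  have Q2: "fg_subuniverse fa U Q2" "Q1 \<subseteq> Q2" "N \<subseteq> Q2"
    using fg_subuniverse_union[OF U_struc Q1 N(1)] unfolding Q2_def by auto
  obtain P2 q2 where q2: "partial_aut Q2 P2 q2" "P1 \<subseteq> P2" "\<forall>y\<in>Q1. q2 y = q1 y"
    using partial_aut_extend[OF q1(1) Q2(1,2)] .
  obtain p2 where p2: "partial_aut P2 Q2 p2" "\<forall>y\<in>Q2. p2 (q2 y) = y"
    using partial_aut_inverse[OF q2(1)] .
  have p1P1: "p1 x \<in> Q1" if "x \<in> P1" for x
    using p1(1) that by (auto simp: partial_aut_def iso_def)
  show ?thesis
  proof
    show "partial_aut P2 Q2 p2" by (rule p2(1))
    show "P \<subseteq> P2" "Q \<subseteq> Q2" using P1(2) q2(2) p1(2) Q2(2) by auto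
    show "n \<in> s_carrier U \<longrightarrow> n \<in> P2 \<and> n \<in> Q2" using N(2) P1(3) q2(2) Q2(3) by auto
    show "\<forall>x\<in>P. p2 x = p x"
    proof
      fix x assume x: "x \<in> P"
      then have "x \<in> P1" "p1 x \<in> Q1" using P1(2) p1P1 by auto
      then have "q2 (p1 x) = x" using q2(3) q1(2) by simp
      then have "p2 x = p1 x" using p2(2) Q2(2) \<open>p1 x \<in> Q1\<close> by (metis subsetD)
      then show "p2 x = p x" using p1(3) x by simp
    qed
  qed
qed

lemma partial_aut_chain:
  assumes "partial_aut P0 Q0 p0"
  obtains P Q p where "\<And>n. partial_aut (P n) (Q n) (p n)" "P 0 = P0" "p 0 = p0"
    "\<And>n. P n \<subseteq> P (Suc n)" "\<And>n. n \<in> s_carrier U \<Longrightarrow> n \<in> P (Suc n) \<and> n \<in> Q (Suc n)"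
    "\<And>n x. x \<in> P n \<Longrightarrow> p (Suc n) x = p n x"
proof -
  define I where "I n s \<longleftrightarrow> partial_aut (fst s) (fst (snd s)) (snd (snd s)) \<and> (n = 0 \<longrightarrow> s = (P0, Q0, p0))"
    for n :: nat and s :: "nat set \<times> nat set \<times> (nat \<Rightarrow> nat)"
  define R where "R n s s' \<longleftrightarrow> fst s \<subseteq> fst s' \<and> fst (snd s) \<subseteq> fst (snd s') \<and>
      (n \<in> s_carrier U \<longrightarrow> n \<in> fst s' \<and> n \<in> fst (snd s')) \<and> (\<forall>x\<in>fst s. snd (snd s') x = snd (snd s) x)"
    for n :: nat and s s' :: "nat set \<times> nat set \<times> (nat \<Rightarrow> nat)"
  have "\<exists>s. I 0 s" using assms unfolding I_def by auto
  moreover have "\<exists>s'. I (Suc n) s' \<and> R n s s'" if I: "I n s" for n s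
  proof -
    obtain P' Q' p' where "partial_aut P' Q' p'" "fst s \<subseteq> P'" "fst (snd s) \<subseteq> Q'"
      "n \<in> s_carrier U \<longrightarrow> n \<in> P' \<and> n \<in> Q'" "\<forall>x\<in>fst s. p' x = snd (snd s) x"
      using partial_aut_back_and_forth[of "fst s" "fst (snd s)" "snd (snd s)" n] I
      unfolding I_def by blast
    then have "I (Suc n) (P', Q', p') \<and> R n s (P', Q', p')" unfolding I_def R_def by simp
    then show ?thesis by blast
  qed
  ultimately obtain s where s: "\<And>n. I n (s n) \<and> R n (s n) (s (Suc n))"
    using dependent_nat_choice[of I R] by blast
  show ?thesis
  proof (rule that[of "\<lambda>n. fst (s n)" "\<lambda>n. fst (snd (s n))" "\<lambda>n. snd (snd (s n))"])
  qed (use s in \<open>auto simp: I_def R_def\<close>)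
qed

lemma partial_aut_of_emb:
  assumes A: "substruc fa ra A U" "fin_gen fa ra A" and \<iota>: "emb fa ra A U \<iota>"
    and r\<iota>: "\<forall>x\<in>s_carrier A. r (\<iota> x) = r x"
  shows "partial_aut (s_carrier A) (\<iota> ` s_carrier A) \<iota>"
  unfolding partial_aut_def
proof (intro conjI)
  obtain F where "finite F" "F \<subseteq> s_carrier A" "s_carrier A = generated fa U F"
    using substruc_fin_gen_generated[OF U_struc A] by blast
  then show "fg_subuniverse fa U (s_carrier A)"
    using A(1) unfolding fg_subuniverse_def substruc_def by blast
  have "emb fa ra (induced ra U (s_carrier A)) U \<iota>"
    using emb_comp[OF iso_emb[OF iso_induced_substruc[OF A(1)]] \<iota>] by simp
  then show "iso fa ra (induced ra U (s_carrier A)) (induced ra U (\<iota> ` s_carrier A)) \<iota>"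
    using iso_image_induced[OF _ induced_is_struc[OF substruc_subuniverse[OF A(1)]]] by force
  show "fg_subuniverse fa U (\<iota> ` s_carrier A)"
    using in_C_image_emb[OF substruc_in_C[OF A] \<iota>] by blast
  show "\<forall>x\<in>s_carrier A. r (\<iota> x) = r x" by (rule r\<iota>)
qed

lemma homogeneity:
  assumes A: "substruc fa ra A U" "fin_gen fa ra A" and \<iota>: "emb fa ra A U \<iota>"
    and r\<iota>: "\<forall>x\<in>s_carrier A. r (\<iota> x) = r x"
  obtains \<alpha> where "automorphism fa ra U \<alpha>" "\<forall>x\<in>s_carrier U. r (\<alpha> x) = r x"
    "\<forall>x\<in>s_carrier A. \<alpha> x = \<iota> x"
proof -
  have start: "partial_aut (s_carrier A) (\<iota> ` s_carrier A) \<iota>"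
    by (rule partial_aut_of_emb[OF A \<iota> r\<iota>])
  obtain P Q p where stage: "\<And>n. partial_aut (P n) (Q n) (p n)" and P0: "P 0 = s_carrier A" "p 0 = \<iota>"
    and step: "\<And>n. P n \<subseteq> P (Suc n)" "\<And>n. n \<in> s_carrier U \<Longrightarrow> n \<in> P (Suc n) \<and> n \<in> Q (Suc n)"
      "\<And>n x. x \<in> P n \<Longrightarrow> p (Suc n) x = p n x"
    using partial_aut_chain[OF start] by blast
  interpret chain: subuniverse_chain fa ra U P
  proof
    show "is_struc fa ra U" by (rule U_struc)
    show "subuniverse fa U (P n)" for n
      using stage fg_subuniverse_subuniverse[OF U_struc] unfolding partial_aut_def by blast
    show "P n \<subseteq> P (Suc n)" for n by (rule step(1))
    show "x \<in> P (Suc x)" if "x \<in> s_carrier U" for x using step(2) that by blast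
  qed
  have emb_stage: "emb fa ra (induced ra U (P n)) U (p n)" for n
    using stage[of n] emb_into_induced[OF fg_subuniverse_induced_is_struc[OF U_struc]
        fg_subuniverse_subset[OF U_struc]] iso_emb unfolding partial_aut_def by blast
  have \<alpha>_eq: "chain_limit p x = p n x" if "x \<in> P n" for n x
    using chain.chain_limit_eq[where k = p, OF step(3) that] .
  have \<alpha>_emb: "emb fa ra U U (chain_limit p)"
    using chain.chain_limit_emb[where k = p, OF step(3) emb_stage] .
  have "s_carrier U \<subseteq> chain_limit p ` s_carrier U"
  proof
    fix y assume y: "y \<in> s_carrier U"
    then have "y \<in> p (Suc y) ` P (Suc y)"
      using step(2) stage[of "Suc y"] unfolding partial_aut_def iso_def by auto
    then obtain x where "x \<in> P (Suc y)" "y = p (Suc y) x" by blast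
    then show "y \<in> chain_limit p ` s_carrier U"
      using \<alpha>_eq chain.Q_subset by (metis image_eqI subsetD)
  qed
  then have "automorphism fa ra U (chain_limit p)"
    using \<alpha>_emb homD(1)[OF emb_hom[OF \<alpha>_emb]] unfolding automorphism_def iso_def by blast
  moreover have "r (chain_limit p x) = r x" if "x \<in> s_carrier U" for x
    using \<alpha>_eq[OF chain.Q_cover[OF that]] stage[of "Suc x"] chain.Q_cover[OF that]
    unfolding partial_aut_def by simp
  moreover have "chain_limit p x = \<iota> x" if "x \<in> s_carrier A" for x
    using \<alpha>_eq[of x 0] P0 that by simp
  ultimately show ?thesis using that by blast
qed

lemma uh_retraction_if_lifting:
  assumes B: "substruc fa ra B U"
  shows "uh_retraction fa ra C U B r"
proof -
  have "B \<in> closure_class fa ra C" using substruc_closure_class[OF B] .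
  then obtain \<iota> where \<iota>: "emb fa ra B U \<iota>" "\<forall>x\<in>s_carrier B. id x = r (\<iota> x)"
    using lift_into_U emb_hom[OF emb_id] by metis
  then have "retraction fa ra U B r"
    unfolding retraction_def using r_hom emb_hom by fastforce
  moreover have "\<exists>\<iota>. emb fa ra A U \<iota> \<and> (\<forall>x\<in>s_carrier A. h x = r (\<iota> x))"
    if "A \<in> closure_class fa ra C" "hom fa ra A B h" for A h
    using lift_into_U[OF that] by metis
  moreover have "\<exists>\<alpha>. automorphism fa ra U \<alpha> \<and> (\<forall>x\<in>s_carrier U. r (\<alpha> x) = r x) \<and>
      (\<forall>x\<in>s_carrier A. \<alpha> x = \<iota> x)"
    if "substruc fa ra A U" "fin_gen fa ra A" "emb fa ra A U \<iota>" "\<forall>x\<in>s_carrier A. r (\<iota> x) = r x"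
    for A \<iota>
    using homogeneity[OF that] by metis
  ultimately show ?thesis unfolding uh_retraction_def by blast
qed

end

section \<open>A retraction with the lifting property\<close>

definition generators :: "('f \<Rightarrow> nat) \<Rightarrow> ('a, 'f, 'r) struc \<Rightarrow> 'a set" where
  "generators fa D = (SOME G. finite G \<and> G \<subseteq> s_carrier D \<and> generated fa D G = s_carrier D)"

lemma generators:
  assumes "is_struc fa ra D" "fin_gen fa ra D"
  shows "finite (generators fa D)" "generators fa D \<subseteq> s_carrier D"
    "generated fa D (generators fa D) = s_carrier D"
proof -
  have "\<exists>G. finite G \<and> G \<subseteq> s_carrier D \<and> generated fa D G = s_carrier D"
    using assms fin_gen_iff by blast
  then have "finite (generators fa D) \<and> generators fa D \<subseteq> s_carrier D \<and>
      generated fa D (generators fa D) = s_carrier D"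
    unfolding generators_def by (rule someI_ex)
  then show "finite (generators fa D)" "generators fa D \<subseteq> s_carrier D"
    "generated fa D (generators fa D) = s_carrier D" by auto
qed

type_synonym request_code = "nat \<times> nat list \<times> (nat \<times> nat) list \<times> (nat \<times> nat) list"

locale retract_setting = fraisse_setting +
  fixes B and e :: "nat \<Rightarrow> nat"
  assumes HAP: "HAP fa ra C" and AEP: "amalgamated_extension fa ra C"
    and B_substruc: "substruc fa ra B U"
    and e_hom: "hom fa ra U U e" and e_idem: "\<forall>x\<in>s_carrier U. e (e x) = e x"
    and e_image: "e ` s_carrier U = s_carrier B"
begin

lemma B_subuniverse: "subuniverse fa U (s_carrier B)"
  using substruc_subuniverse[OF B_substruc] .

lemma e_fix: "b \<in> s_carrier B \<Longrightarrow> e b = b"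
  using e_image e_idem by (metis imageE)

lemma hom_into_B: "is_struc fa ra X \<Longrightarrow> hom fa ra X B h \<longleftrightarrow> hom fa ra X U h \<and> h ` s_carrier X \<subseteq> s_carrier B"
  using hom_into_substruc[OF B_substruc] .

lemma e_hom_B: "hom fa ra U B e"
  using hom_into_B[OF U_struc] e_hom e_image by simp

definition stage :: "nat set \<Rightarrow> (nat \<Rightarrow> nat) \<Rightarrow> bool" where
  "stage V \<rho> \<longleftrightarrow> fg_subuniverse fa U V \<and> hom fa ra (induced ra U V) B \<rho>"

lemma stageD:
  assumes "stage V \<rho>"
  shows "fg_subuniverse fa U V" "V \<subseteq> s_carrier U" "in_C (induced ra U V)"
    "is_struc fa ra (induced ra U V)" "hom fa ra (induced ra U V) U \<rho>" "\<rho> ` V \<subseteq> s_carrier B"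
    "fg_subuniverse fa U (\<rho> ` V)"
proof -
  show V: "fg_subuniverse fa U V" using assms by (simp add: stage_def)
  show "V \<subseteq> s_carrier U" using fg_subuniverse_subset[OF U_struc V] .
  show C: "in_C (induced ra U V)" using fg_subuniverse_in_C[OF V] .
  show S: "is_struc fa ra (induced ra U V)" using fg_subuniverse_induced_is_struc[OF U_struc V] .
  show "hom fa ra (induced ra U V) U \<rho>" "\<rho> ` V \<subseteq> s_carrier B"
    using assms hom_into_B[OF S] by (auto simp: stage_def)
  then show "fg_subuniverse fa U (\<rho> ` V)"
    using fg_subuniverse_hom_image[OF U_struc S in_C_fin_gen[OF C]] by simp
qed

lemma stage_enlarge:
  assumes \<rho>: "stage V \<rho>" and V': "fg_subuniverse fa U V'" "V \<subseteq> V'"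
  obtains \<rho>' where "stage V' \<rho>'" "\<forall>v\<in>V. \<rho>' v = \<rho> v"
proof -
  note V = stageD[OF \<rho>]
  define T where "T = \<rho> ` V"
  have T: "in_C (induced ra U T)" "T \<subseteq> s_carrier U"
    using fg_subuniverse_in_C[OF V(7)] fg_subuniverse_subset[OF U_struc V(7)] unfolding T_def by auto
  have f1: "emb fa ra (induced ra U V) (induced ra U V') id"
    using emb_into_induced[OF V(4) fg_subuniverse_subset[OF U_struc V'(1)]]
      emb_induced[OF V(2) emb_id] V'(2) by simp
  have f2: "hom fa ra (induced ra U V) (induced ra U T) \<rho>"
    using hom_into_induced[OF V(4) T(2)] V(5) unfolding T_def by simp
  obtain D g1 g2 where D: "in_C D" "emb fa ra (induced ra U T) D g2" "hom fa ra (induced ra U V') D g1"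
    "\<forall>x\<in>s_carrier (induced ra U V). g1 (id x) = g2 (\<rho> x)"
    by (rule HAP_in_C[OF HAP V(3) fg_subuniverse_in_C[OF V'(1)] T(1) f1 f2])
  obtain j where j: "emb fa ra D U j" "\<forall>x\<in>T. j (g2 x) = x"
    using extend_emb[OF T(1) D(1) D(2) emb_induced[OF T(2) emb_id]] by auto
  show ?thesis
  proof
    show "stage V' (e \<circ> j \<circ> g1)"
      unfolding stage_def using V'(1) hom_comp[OF D(3) hom_comp[OF emb_hom[OF j(1)] e_hom_B]]
      by (simp add: comp_assoc)
    show "\<forall>v\<in>V. (e \<circ> j \<circ> g1) v = \<rho> v"
      using D(4) j(2) e_fix V(6) unfolding T_def by auto
  qed
qed

lemma stage_of_emb:
  assumes D: "in_C D" and j: "emb fa ra D U j" and \<phi>: "hom fa ra D U \<phi>"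
  obtains \<rho> where "stage (j ` s_carrier D) \<rho>" "\<forall>x\<in>s_carrier D. \<rho> (j x) = e (\<phi> x)"
proof -
  have V: "fg_subuniverse fa U (j ` s_carrier D)" "iso fa ra D (induced ra U (j ` s_carrier D)) j"
    using in_C_image_emb[OF D j] by auto
  obtain q where q: "iso fa ra (induced ra U (j ` s_carrier D)) D q" "\<forall>x\<in>s_carrier D. q (j x) = x"
    by (rule iso_inverse[OF V(2) in_C_struc[OF D] fg_subuniverse_induced_is_struc[OF U_struc V(1)]])
  show ?thesis
  proof
    show "stage (j ` s_carrier D) (e \<circ> \<phi> \<circ> q)"
      unfolding stage_def using V(1) hom_comp[OF hom_comp[OF emb_hom[OF iso_emb[OF q(1)]] \<phi>] e_hom_B]
      by (simp add: comp_assoc)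
    show "\<forall>x\<in>s_carrier D. (e \<circ> \<phi> \<circ> q) (j x) = e (\<phi> x)" using q(2) by simp
  qed
qed

lemma stage_serve:
  assumes \<rho>: "stage V \<rho>" and D: "in_C D" and F: "finite F" "F \<subseteq> s_carrier D"
    and h: "hom fa ra D B h" and f: "emb fa ra (induced ra D (generated fa D F)) U f"
    and fV: "f ` generated fa D F \<subseteq> V" and eq: "\<forall>x\<in>generated fa D F. \<rho> (f x) = h x"
  obtains V' \<rho>' g where "stage V' \<rho>'" "V \<subseteq> V'" "\<forall>v\<in>V. \<rho>' v = \<rho> v"
    "emb fa ra D U g" "g ` s_carrier D \<subseteq> V'" "\<forall>x\<in>generated fa D F. g x = f x"
    "\<forall>x\<in>s_carrier D. \<rho>' (g x) = h x"
proof -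
  note V = stageD[OF \<rho>]
  have D_struc: "is_struc fa ra D" using in_C_struc[OF D] .
  define P where "P = generated fa D F"
  define A where "A = induced ra D P"
  have P: "subuniverse fa D P" unfolding P_def using generated_subuniverse[OF D_struc] .
  have A_struc: "is_struc fa ra A" unfolding A_def using induced_is_struc[OF P] .
  have fA: "emb fa ra A U f" using f unfolding A_def P_def .
  have A_in_C: "in_C A"
    using in_C_of_emb[OF A_struc _ fA] fin_gen_generated[OF D_struc F] unfolding A_def P_def by simp
  have hD: "hom fa ra D U h" "h ` s_carrier D \<subseteq> s_carrier B" using h hom_into_B[OF D_struc] by auto
  define T where "T = generated fa U (\<rho> ` V \<union> h ` s_carrier D)"
  have T: "fg_subuniverse fa U T" "\<rho> ` V \<subseteq> T" "h ` s_carrier D \<subseteq> T"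
    unfolding T_def by (rule fg_subuniverse_image_union[OF V(3) V(5) D hD(1), simplified])+
  have TU: "T \<subseteq> s_carrier U" using fg_subuniverse_subset[OF U_struc T(1)] .
  have "(\<rho> ` V \<union> h ` s_carrier D) \<inter> s_carrier U \<subseteq> s_carrier B" using V(6) hD(2) by blast
  then have TB: "T \<subseteq> s_carrier B" unfolding T_def by (rule generated_least[OF B_subuniverse])
  have f1: "emb fa ra A (induced ra U V) f"
    using emb_into_induced[OF A_struc V(2)] fA fV unfolding A_def P_def by simp
  have f2: "emb fa ra A D id" using induced_substruc[OF P] unfolding A_def substruc_def by blast
  have h1: "hom fa ra (induced ra U V) (induced ra U T) \<rho>" using hom_into_induced[OF V(4) TU] V(5) T(2) by simp
  have h2: "hom fa ra D (induced ra U T) h" using hom_into_induced[OF D_struc TU] hD(1) T(3) by simp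
  have "\<forall>x\<in>s_carrier A. \<rho> (f x) = h (id x)" using eq unfolding A_def P_def by simp
  then obtain Dc T' g1 g2 k hh where R: "in_C Dc" "in_C T'" "emb fa ra (induced ra U V) Dc g1"
    "emb fa ra D Dc g2" "\<forall>x\<in>s_carrier A. g1 (f x) = g2 (id x)" "emb fa ra (induced ra U T) T' k"
    "hom fa ra Dc T' hh" "\<forall>x\<in>s_carrier (induced ra U V). hh (g1 x) = k (\<rho> x)"
    "\<forall>x\<in>s_carrier D. hh (g2 x) = k (h x)"
    by (rule amalgamated_extension_in_C[OF AEP A_in_C V(3) D fg_subuniverse_in_C[OF T(1)] f1 f2 h1 h2])
  obtain j where j: "emb fa ra Dc U j" "\<forall>x\<in>V. j (g1 x) = x"
    using extend_emb[OF V(3) R(1,3) emb_induced[OF V(2) emb_id]] by auto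
  obtain m where m: "emb fa ra T' U m" "\<forall>x\<in>T. m (k x) = x"
    using extend_emb[OF fg_subuniverse_in_C[OF T(1)] R(2,6) emb_induced[OF TU emb_id]] by auto
  obtain \<rho>' where \<rho>': "stage (j ` s_carrier Dc) \<rho>'" "\<forall>x\<in>s_carrier Dc. \<rho>' (j x) = e (m (hh x))"
    using stage_of_emb[OF R(1) j(1) hom_comp[OF R(7) emb_hom[OF m(1)]]] by auto
  have g1V: "g1 v \<in> s_carrier Dc" if "v \<in> V" for v using homD(1)[OF emb_hom[OF R(3)]] that by simp
  have g2D: "g2 x \<in> s_carrier Dc" if "x \<in> s_carrier D" for x using homD(1)[OF emb_hom[OF R(4)]] that .
  show ?thesis
  proof
    show "stage (j ` s_carrier Dc) \<rho>'" by (rule \<rho>'(1))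
    show "V \<subseteq> j ` s_carrier Dc" using j(2) g1V by (metis image_eqI subsetI)
    show "\<forall>v\<in>V. \<rho>' v = \<rho> v"
      using \<rho>'(2) j(2) g1V R(8) m(2) T(2) V(6) e_fix by (metis image_subset_iff induced_simps(1))
    show "emb fa ra D U (j \<circ> g2)" using emb_comp[OF R(4) j(1)] .
    show "(j \<circ> g2) ` s_carrier D \<subseteq> j ` s_carrier Dc" using g2D by auto
    show "\<forall>x\<in>generated fa D F. (j \<circ> g2) x = f x"
      using R(5) j(2) fV unfolding A_def P_def by (metis comp_apply id_apply image_subset_iff induced_simps(1))
    show "\<forall>x\<in>s_carrier D. \<rho>' ((j \<circ> g2) x) = h x"
      using \<rho>'(2) g2D R(9) m(2) T(3) hD(2) e_fix by (simp add: image_subset_iff subset_iff)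
  qed
qed

definition reps where
  "reps = (SOME S. S \<subseteq> C \<and> countable S \<and> (\<forall>A\<in>C. \<exists>B\<in>S. isomorphic fa ra A B))"

lemma reps: "reps \<subseteq> C" "countable reps" "\<forall>A\<in>C. \<exists>B\<in>reps. isomorphic fa ra A B"
proof -
  have "\<exists>S. S \<subseteq> C \<and> countable S \<and> (\<forall>A\<in>C. \<exists>B\<in>S. isomorphic fa ra A B)"
    using fraisse unfolding fraisse_class_def is_age_def by blast
  then have "reps \<subseteq> C \<and> countable reps \<and> (\<forall>A\<in>C. \<exists>B\<in>reps. isomorphic fa ra A B)"
    unfolding reps_def by (rule someI_ex)
  then show "reps \<subseteq> C" "countable reps" "\<forall>A\<in>C. \<exists>B\<in>reps. isomorphic fa ra A B" by auto
qed

text \<open>The tables \<open>Lh\<close> and \<open>Lf\<close> record \<open>h\<close> on the generators of \<open>D\<close> and \<open>f\<close> on \<open>F\<close>.  They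
determine \<open>h\<close> and \<open>f\<close> (\<open>request_unique\<close>), so countably many codes cover all requests.\<close>

definition request where
  "request D F Lh Lf V \<rho> h f \<longleftrightarrow> D \<in> reps \<and> finite F \<and> F \<subseteq> s_carrier D \<and> hom fa ra D B h \<and>
     emb fa ra (induced ra D (generated fa D F)) U f \<and> f ` generated fa D F \<subseteq> V \<and>
     (\<forall>x\<in>generated fa D F. \<rho> (f x) = h x) \<and>
     (\<forall>x\<in>generators fa D. h x = the (map_of Lh x)) \<and> (\<forall>x\<in>F. f x = the (map_of Lf x))"

definition served where
  "served D F Lh Lf V \<rho> V' \<rho>' \<longleftrightarrow> (\<forall>h f. request D F Lh Lf V \<rho> h f \<longrightarrow>
     (\<exists>g. emb fa ra D U g \<and> g ` s_carrier D \<subseteq> V' \<and> (\<forall>x\<in>generated fa D F. g x = f x) \<and>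
        (\<forall>x\<in>s_carrier D. \<rho>' (g x) = h x)))"

text \<open>Stage \<open>n\<close> serves the request coded by the first component of \<open>prod_decode n\<close>, so each code
is served at infinitely many stages, and also puts \<open>n\<close> into the domain.\<close>

definition decode :: "nat \<Rightarrow> request_code" where
  "decode n = from_nat (fst (prod_decode n))"

definition stage_step where
  "stage_step n V \<rho> V' \<rho>' \<longleftrightarrow> stage V' \<rho>' \<and> V \<subseteq> V' \<and> (n \<in> s_carrier U \<longrightarrow> n \<in> V') \<and>
     (\<forall>v\<in>V. \<rho>' v = \<rho> v) \<and>
     (case decode n of (i, Fs, Lh, Lf) \<Rightarrow> served (from_nat_into reps i) (set Fs) Lh Lf V \<rho> V' \<rho>')"

lemma request_unique:
  assumes r1: "request D F Lh Lf V \<rho> h f" and r2: "request D F Lh Lf V \<rho> h' f'"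
  shows "\<forall>x\<in>s_carrier D. h x = h' x" "\<forall>x\<in>generated fa D F. f x = f' x"
proof -
  have D: "D \<in> C" "F \<subseteq> s_carrier D" using r1 reps(1) by (auto simp: request_def)
  note G = generators[OF C_struc[OF D(1)] C_fin_gen[OF D(1)]]
  have hh: "hom fa ra D B h" "hom fa ra D B h'" using r1 r2 by (auto simp: request_def)
  have "h x = h' x" if "x \<in> generators fa D" for x using r1 r2 that by (simp add: request_def)
  then show "\<forall>x\<in>s_carrier D. h x = h' x"
    using hom_eq_on_generated[OF hh C_struc[OF D(1)], of "generators fa D"] G(3) by blast
  have P: "subuniverse fa D (generated fa D F)" using generated_subuniverse[OF C_struc[OF D(1)]] .
  have ff: "hom fa ra (induced ra D (generated fa D F)) U f" "hom fa ra (induced ra D (generated fa D F)) U f'"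
    using r1 r2 by (auto simp: request_def emb_def)
  have "f x = f' x" if "x \<in> F" for x using r1 r2 that by (simp add: request_def)
  moreover have "generated fa (induced ra D (generated fa D F)) F = generated fa D F"
    using generated_induced[OF C_struc[OF D(1)] P generated_superset[OF D(2)]] .
  ultimately show "\<forall>x\<in>generated fa D F. f x = f' x"
    using hom_eq_on_generated[OF ff induced_is_struc[OF P], of F] by blast
qed

lemma served_exists:
  assumes \<rho>: "stage V \<rho>"
  obtains V' \<rho>' where "stage V' \<rho>'" "V \<subseteq> V'" "\<forall>v\<in>V. \<rho>' v = \<rho> v" "served D F Lh Lf V \<rho> V' \<rho>'"
proof (cases "\<exists>h f. request D F Lh Lf V \<rho> h f")
  case False
  then show ?thesis using that[of V \<rho>] \<rho> unfolding served_def by blast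
next
  case True
  then obtain h0 f0 where req: "request D F Lh Lf V \<rho> h0 f0" by blast
  then have D: "in_C D" using reps(1) C_in_C by (auto simp: request_def)
  have r: "finite F" "F \<subseteq> s_carrier D" "hom fa ra D B h0"
    "emb fa ra (induced ra D (generated fa D F)) U f0" "f0 ` generated fa D F \<subseteq> V"
    "\<forall>x\<in>generated fa D F. \<rho> (f0 x) = h0 x"
    using req by (simp_all add: request_def)
  obtain V' \<rho>' g where new: "stage V' \<rho>'" "V \<subseteq> V'" "\<forall>v\<in>V. \<rho>' v = \<rho> v"
    "emb fa ra D U g" "g ` s_carrier D \<subseteq> V'" "\<forall>x\<in>generated fa D F. g x = f0 x"
    "\<forall>x\<in>s_carrier D. \<rho>' (g x) = h0 x"
    by (rule stage_serve[OF \<rho> D r])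
  have "served D F Lh Lf V \<rho> V' \<rho>'"
    unfolding served_def
  proof (intro allI impI)
    fix h f assume "request D F Lh Lf V \<rho> h f"
    from request_unique[OF req this]
    have "\<forall>x\<in>generated fa D F. g x = f x" "\<forall>x\<in>s_carrier D. \<rho>' (g x) = h x"
      using new(6,7) by auto
    then show "\<exists>g. emb fa ra D U g \<and> g ` s_carrier D \<subseteq> V' \<and> (\<forall>x\<in>generated fa D F. g x = f x) \<and>
        (\<forall>x\<in>s_carrier D. \<rho>' (g x) = h x)"
      using new(4,5) by blast
  qed
  then show ?thesis using that new(1-3) by blast
qed

lemma served_mono:
  assumes served: "served D F Lh Lf V \<rho> V1 \<rho>1" and V1: "V1 \<subseteq> V2" "\<forall>v\<in>V1. \<rho>2 v = \<rho>1 v"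
  shows "served D F Lh Lf V \<rho> V2 \<rho>2"
  unfolding served_def
proof (intro allI impI)
  fix h f assume "request D F Lh Lf V \<rho> h f"
  then obtain g where g: "emb fa ra D U g" "g ` s_carrier D \<subseteq> V1" "\<forall>x\<in>generated fa D F. g x = f x"
    "\<forall>x\<in>s_carrier D. \<rho>1 (g x) = h x"
    using served unfolding served_def by blast
  then have "g ` s_carrier D \<subseteq> V2" "\<forall>x\<in>s_carrier D. \<rho>2 (g x) = h x" using V1 by auto
  then show "\<exists>g. emb fa ra D U g \<and> g ` s_carrier D \<subseteq> V2 \<and> (\<forall>x\<in>generated fa D F. g x = f x) \<and>
      (\<forall>x\<in>s_carrier D. \<rho>2 (g x) = h x)"
    using g(1,3) by blast
qed

lemma stage_step_exists:
  assumes \<rho>: "stage V \<rho>"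
  obtains V' \<rho>' where "stage_step n V \<rho> V' \<rho>'"
proof -
  obtain i Fs Lh Lf where code: "decode n = (i, Fs, Lh, Lf)" by (cases "decode n")
  obtain V1 \<rho>1 where V1: "stage V1 \<rho>1" "V \<subseteq> V1" "\<forall>v\<in>V. \<rho>1 v = \<rho> v"
    and served: "served (from_nat_into reps i) (set Fs) Lh Lf V \<rho> V1 \<rho>1"
    using served_exists[OF \<rho>] by blast
  define N where "N = generated fa U ({n} \<inter> s_carrier U)"
  define V2 where "V2 = generated fa U (V1 \<union> N)"
  have V2: "fg_subuniverse fa U V2" "V1 \<subseteq> V2" "N \<subseteq> V2"
    using fg_subuniverse_union[OF U_struc stageD(1)[OF V1(1)] fg_subuniverse_point(1)[OF U_struc]]
    unfolding V2_def N_def by auto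
  have nV2: "n \<in> s_carrier U \<longrightarrow> n \<in> V2" using fg_subuniverse_point(2)[OF U_struc] V2(3)
    unfolding N_def by blast
  obtain \<rho>2 where \<rho>2: "stage V2 \<rho>2" "\<forall>v\<in>V1. \<rho>2 v = \<rho>1 v"
    using stage_enlarge[OF V1(1) V2(1,2)] .
  have "served (from_nat_into reps i) (set Fs) Lh Lf V \<rho> V2 \<rho>2"
    using served_mono[OF served V2(2) \<rho>2(2)] .
  then have "stage_step n V \<rho> V2 \<rho>2"
    unfolding stage_step_def code using \<rho>2(1) V1(2,3) V2(2) nV2 \<rho>2(2) by auto
  then show ?thesis using that by blast
qed

context
  fixes V :: "nat \<Rightarrow> nat set" and \<rho> :: "nat \<Rightarrow> nat \<Rightarrow> nat"
  assumes stages: "\<And>n. stage (V n) (\<rho> n)"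
    and steps: "\<And>n. stage_step n (V n) (\<rho> n) (V (Suc n)) (\<rho> (Suc n))"
begin

lemma stages_chain: "subuniverse_chain fa ra U V"
proof
  show "is_struc fa ra U" by (rule U_struc)
  show "subuniverse fa U (V n)" for n using fg_subuniverse_subuniverse[OF U_struc stageD(1)[OF stages]] .
  show "V n \<subseteq> V (Suc n)" for n using steps[of n] by (simp add: stage_step_def)
  show "x \<in> V (Suc x)" if "x \<in> s_carrier U" for x using steps[of x] that by (simp add: stage_step_def)
qed

lemma stages_agree: "x \<in> V n \<Longrightarrow> \<rho> (Suc n) x = \<rho> n x"
  using steps[of n] by (simp add: stage_step_def)

lemma stages_limit_eq: "x \<in> V n \<Longrightarrow> chain_limit \<rho> x = \<rho> n x"
  using subuniverse_chain.chain_limit_eq[OF stages_chain, where k = \<rho>, OF stages_agree] .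

lemma stages_limit_hom: "hom fa ra U B (chain_limit \<rho>)"
  using subuniverse_chain.chain_limit_hom[OF stages_chain, where k = \<rho>, OF stages_agree] stages by (simp add: stage_def)

lemma stages_limit_lifting:
  assumes D: "D \<in> reps"
  shows "lifting_property fa ra U B (chain_limit \<rho>) D"
  unfolding lifting_property_def
proof (intro allI impI; elim conjE)
  fix F h f
  assume F: "finite F" "F \<subseteq> s_carrier D" and h: "hom fa ra D B h"
    and f: "emb fa ra (induced ra D (generated fa D F)) U f"
    and eq: "\<forall>x\<in>generated fa D F. chain_limit \<rho> (f x) = h x"
  have D_struc: "is_struc fa ra D" using C_struc D reps(1) by blast
  have P: "subuniverse fa D (generated fa D F)" using generated_subuniverse[OF D_struc] .
  have FP: "F \<subseteq> generated fa D F" using generated_superset[OF F(2)] .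
  have fU: "f ` F \<subseteq> s_carrier U" using homD(1)[OF emb_hom[OF f]] FP by auto
  define m where "m = Suc (Max (insert 0 (f ` F)))"
  have FP': "F \<subseteq> s_carrier (induced ra D (generated fa D F))" using FP by simp
  have "f ` generated fa D F = generated fa U (f ` F)"
    using hom_image_generated[OF emb_hom[OF f] induced_is_struc[OF P] U_struc FP']
      generated_induced[OF D_struc P FP] by simp
  also have "\<dots> \<subseteq> V m"
    using generated_least[OF subuniverse_chain.Q_subuniverse[OF stages_chain]]
      subuniverse_chain.finite_subset_stage[OF stages_chain _ fU] F(1) unfolding m_def by blast
  finally have fV: "f ` generated fa D F \<subseteq> V m" .
  obtain i where i: "from_nat_into reps i = D" using from_nat_into_surj[OF reps(2) D] by blast
  define Lh where "Lh = map (\<lambda>x. (x, h x)) (sorted_list_of_set (generators fa D))"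
  define Lf where "Lf = map (\<lambda>x. (x, f x)) (sorted_list_of_set F)"
  define n where "n = prod_encode (to_nat (i, sorted_list_of_set F, Lh, Lf), m)"
  have mn: "V m \<subseteq> V n"
    using subuniverse_chain.Q_mono[OF stages_chain le_prod_encode_2] unfolding n_def .
  have fVn: "f ` generated fa D F \<subseteq> V n" using fV mn by blast
  have eq_n: "\<forall>x\<in>generated fa D F. \<rho> n (f x) = h x"
  proof
    fix x assume "x \<in> generated fa D F"
    then show "\<rho> n (f x) = h x" using eq fVn stages_limit_eq by (metis image_subset_iff)
  qed
  have req: "request D F Lh Lf (V n) (\<rho> n) h f"
    unfolding request_def Lh_def Lf_def
    using D F h f fVn eq_n generators(1)[OF D_struc C_fin_gen] reps(1)
    by (auto simp: map_of_map_restrict)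
  have "decode n = (i, sorted_list_of_set F, Lh, Lf)" unfolding decode_def n_def by simp
  then have "served D F Lh Lf (V n) (\<rho> n) (V (Suc n)) (\<rho> (Suc n))"
    using steps[of n] i F(1) unfolding stage_step_def by simp
  then obtain g where g: "emb fa ra D U g" "g ` s_carrier D \<subseteq> V (Suc n)"
    "\<forall>x\<in>generated fa D F. g x = f x" "\<forall>x\<in>s_carrier D. \<rho> (Suc n) (g x) = h x"
    using req unfolding served_def by blast
  have "chain_limit \<rho> (g x) = h x" if "x \<in> s_carrier D" for x
    using stages_limit_eq[of "g x" "Suc n"] g(2,4) that by auto
  then show "\<exists>g. emb fa ra D U g \<and> (\<forall>x\<in>generated fa D F. g x = f x) \<and>
      (\<forall>x\<in>s_carrier D. chain_limit \<rho> (g x) = h x)"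
    using g(1,3) by blast
qed

end

lemma lifting_hom_exists:
  obtains r where "hom fa ra U B r" "\<And>D. in_C D \<Longrightarrow> lifting_property fa ra U B r D"
proof -
  have "generated fa U {} \<subseteq> s_carrier B" using generated_least[OF B_subuniverse] by blast
  then have "stage (generated fa U {}) id"
    unfolding stage_def
    using hom_into_B[OF induced_is_struc[OF generated_subuniverse[OF U_struc]]]
      emb_hom[OF emb_induced[OF generated_subset[OF U_struc] emb_id]]
      fg_subuniverse_generated[OF U_struc, of "{}"] by simp
  then have "\<exists>x. stage (fst x) (snd x)" by auto
  moreover have "\<exists>y. stage (fst y) (snd y) \<and> stage_step n (fst x) (snd x) (fst y) (snd y)"
    if x: "stage (fst x) (snd x)" for n x
  proof -
    obtain V' \<rho>' where "stage_step n (fst x) (snd x) V' \<rho>'" using stage_step_exists[OF x] .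
    then show ?thesis by (intro exI[of _ "(V', \<rho>')"]) (simp add: stage_step_def)
  qed
  ultimately obtain s where s: "\<And>n. stage (fst (s n)) (snd (s n)) \<and>
      stage_step n (fst (s n)) (snd (s n)) (fst (s (Suc n))) (snd (s (Suc n)))"
    using dependent_nat_choice[of "\<lambda>n x. stage (fst x) (snd x)"
        "\<lambda>n x y. stage_step n (fst x) (snd x) (fst y) (snd y)"] by blast
  define V where "V n = fst (s n)" for n
  define \<rho> where "\<rho> n = snd (s n)" for n
  have stages: "\<And>n. stage (V n) (\<rho> n)" and steps: "\<And>n. stage_step n (V n) (\<rho> n) (V (Suc n)) (\<rho> (Suc n))"
    using s unfolding V_def \<rho>_def by auto
  show ?thesis
  proof
    show "hom fa ra U B (chain_limit \<rho>)" using stages_limit_hom[OF stages steps] .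
    fix D assume "in_C D"
    then obtain Y \<phi> where Y: "Y \<in> C" "iso fa ra D Y \<phi>" by (rule in_C_copy)
    obtain D0 \<psi> where D0: "D0 \<in> reps" "iso fa ra Y D0 \<psi>"
      using reps(3) Y(1) unfolding isomorphic_def by blast
    show "lifting_property fa ra U B (chain_limit \<rho>) D"
      using lifting_property_iso[OF stages_limit_lifting[OF stages steps D0(1)] iso_comp[OF Y(2) D0(2)]]
        in_C_struc[OF \<open>in_C D\<close>] C_struc reps(1) D0(1) by blast
  qed
qed

end

theorem corollary4p9:
  fixes fa :: "'f \<Rightarrow> nat" and ra :: "'r \<Rightarrow> nat"
    and \<C> :: "('f, 'r) cstruc set" and U :: "('f, 'r) cstruc"
  assumes "fraisse_class fa ra \<C>"
    and "fraisse_limit fa ra \<C> U"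
  shows "(HAP fa ra \<C> \<and> amalgamated_extension fa ra \<C>) \<longleftrightarrow>
         (\<forall>B. retract fa ra U B \<longrightarrow> (\<exists>r. uh_retraction fa ra \<C> U B r))"
proof -
  interpret fraisse_setting fa ra \<C> U using assms by unfold_locales
  show ?thesis
  proof (intro iffI allI impI)
    fix B assume HA: "HAP fa ra \<C> \<and> amalgamated_extension fa ra \<C>" and "retract fa ra U B"
    then obtain e where B: "substruc fa ra B U" and e: "hom fa ra U U e"
      "\<forall>x\<in>s_carrier U. e (e x) = e x" "e ` s_carrier U = s_carrier B"
      unfolding retract_def by blast
    interpret retract_setting fa ra \<C> U B e using HA B e by unfold_locales auto
    obtain r where "hom fa ra U B r" "\<And>D. iso_member fa ra \<C> D \<Longrightarrow> lifting_property fa ra U B r D"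
      using lifting_hom_exists by blast
    then interpret lifting_setting fa ra \<C> U B r by unfold_locales
    show "\<exists>r. uh_retraction fa ra \<C> U B r" using uh_retraction_if_lifting[OF B] by blast
  next
    assume "\<forall>B. retract fa ra U B \<longrightarrow> (\<exists>r. uh_retraction fa ra \<C> U B r)"
    moreover have "retract fa ra U U"
      unfolding retract_def using substruc_refl[OF U_struc] emb_hom[OF emb_id, of fa ra U]
      by (intro conjI exI[of _ id]) auto
    ultimately obtain r where "uh_retraction fa ra \<C> U U r" by blast
    then show "HAP fa ra \<C> \<and> amalgamated_extension fa ra \<C>"
      using HAP_if_uh_retraction amalgamated_extension_if_uh_retraction by blast
  qed
qed

end
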